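(* Let $Q$ be a quiver without oriented cycles and $\mathbf{1}$ the dimension vector with $\mathbf{1}(x)=1$ for all $x\in Q_0$. For every $W\in\operatorname{Rep}(Q,\mathbf{1})$, the orbit closure $\overline{\operatorname{GL}(\mathbf{1})W}\subseteq\operatorname{Rep}(Q,\mathbf{1})$ is a normal variety.
   Context: Work over an algebraically closed field $k$ of characteristic zero. $\operatorname{Rep}(Q,\mathbf{1})=k^{Q_1}$ with the torus $\operatorname{GL}(\mathbf{1})=(k^* )^{Q_0}$ acting by $(g\cdot W)(a)=g(ha)W(a)g(ta)^{-1}$; $\overline{\operatorname{GL}(\mathbf{1})W}$ is the Zariski closure of the orbit of $W$. *)

theory Defs
  imports Main "HOL-Computational_Algebra.Polynomial"
begin

definition alg_closed :: "'k::field itself \<Rightarrow> bool" where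
  "alg_closed _ \<longleftrightarrow> (\<forall>p :: 'k poly. degree p > 0 \<longrightarrow> (\<exists>x. poly p x = 0))"

inductive_set polyfun :: "(('i \<Rightarrow> 'k::field) \<Rightarrow> 'k) set" where
  const: "(\<lambda>_. c) \<in> polyfun"
| coord: "(\<lambda>x. x i) \<in> polyfun"
| add: "f \<in> polyfun \<Longrightarrow> g \<in> polyfun \<Longrightarrow> (\<lambda>x. f x + g x) \<in> polyfun"
| mult: "f \<in> polyfun \<Longrightarrow> g \<in> polyfun \<Longrightarrow> (\<lambda>x. f x * g x) \<in> polyfun"

definition zariski_closure :: "(('i \<Rightarrow> 'k::field)) set \<Rightarrow> ('i \<Rightarrow> 'k) set" where
  "zariski_closure S = {x. \<forall>p\<in>polyfun. (\<forall>s\<in>S. p s = 0) \<longrightarrow> p x = 0}"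

text \<open>Irreducibility of a closed set V: its coordinate ring (polynomial functions restricted to V)
  is an integral domain, i.e. V nonempty and pq = 0 on V forces p = 0 or q = 0 on V.\<close>
definition irreducible_variety :: "('i \<Rightarrow> 'k::field) set \<Rightarrow> bool" where
  "irreducible_variety V \<longleftrightarrow> V \<noteq> {} \<and>
     (\<forall>p\<in>polyfun. \<forall>q\<in>polyfun. (\<forall>x\<in>V. p x * q x = 0) \<longrightarrow> (\<forall>x\<in>V. p x = 0) \<or> (\<forall>x\<in>V. q x = 0))"

text \<open>Normality of an affine variety V: V is irreducible and its coordinate ring k[V]
  (= polynomial functions restricted to V) is integrally closed in its fraction field.
  An element f/g of the fraction field (g not identically zero on V) is integral over k[V]
  iff there are n>0 and c_0,...,c_{n-1} in k[V] with (f/g)^n + sum c_j (f/g)^j = 0,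
  i.e. (clearing denominators) f^n + sum c_j f^j g^(n-j) = 0 on V; it lies in k[V] iff
  f = r g on V for some r in k[V].\<close>
definition normal_variety :: "('i \<Rightarrow> 'k::field) set \<Rightarrow> bool" where
  "normal_variety V \<longleftrightarrow> irreducible_variety V \<and>
     (\<forall>f\<in>polyfun. \<forall>g\<in>polyfun. (\<exists>x\<in>V. g x \<noteq> 0) \<longrightarrow>
        (\<forall>n>0. \<forall>c. (\<forall>j<n. c j \<in> polyfun) \<longrightarrow>
            (\<forall>x\<in>V. f x ^ n + (\<Sum>j<n. c j x * f x ^ j * g x ^ (n - j)) = 0) \<longrightarrow>
            (\<exists>r\<in>polyfun. \<forall>x\<in>V. f x = r x * g x)))"

text \<open>Quiver with vertex type 'v and arrow type 'a, head map hd and tail map tl.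
  An oriented cycle is a nonempty list of arrows a_0,...,a_{m-1} with t(a_{i+1}) = h(a_i)
  and t(a_0) = h(a_{m-1}).\<close>
definition has_oriented_cycle :: "('a \<Rightarrow> 'v) \<Rightarrow> ('a \<Rightarrow> 'v) \<Rightarrow> bool" where
  "has_oriented_cycle h t \<longleftrightarrow> (\<exists>as. as \<noteq> [] \<and>
      (\<forall>i. Suc i < length as \<longrightarrow> t (as ! Suc i) = h (as ! i)) \<and>
      t (hd as) = h (last as))"

text \<open>Action of the torus GL(1) = (k^*)^{Q_0} on Rep(Q,1) = k^{Q_1}.\<close>
definition torus_act :: "('a \<Rightarrow> 'v) \<Rightarrow> ('a \<Rightarrow> 'v) \<Rightarrow> ('v \<Rightarrow> 'k::field) \<Rightarrow> ('a \<Rightarrow> 'k) \<Rightarrow> ('a \<Rightarrow> 'k)" where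
  "torus_act h t g W = (\<lambda>a. g (h a) * W a * inverse (g (t a)))"

definition torus_orbit :: "('a \<Rightarrow> 'v) \<Rightarrow> ('a \<Rightarrow> 'v) \<Rightarrow> ('a \<Rightarrow> 'k::field) \<Rightarrow> ('a \<Rightarrow> 'k) set" where
  "torus_orbit h t W = {torus_act h t g W | g. \<forall>v. g v \<noteq> 0}"

end

theory Submission
  imports Defs "HOL-Library.Function_Algebras"
begin

text \<open>
  The torus \<open>T = (k\<^sup>*)\<^sup>Q\<^sup>\<^sub>0\<close> acts on the coordinate of an arrow \<open>a\<close> by the character with
  exponent \<open>e\<^sub>h\<^sub>a - e\<^sub>t\<^sub>a\<close>. Pulling back along \<open>g \<mapsto> g \<cdot> W\<close> embeds the coordinate ring of the
  orbit closure \<open>V\<close> into the Laurent polynomials on \<open>T\<close>; its image is spanned by the characters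
  whose exponents lie in the semigroup generated by the weights of the arrows in the support
  of \<open>W\<close>. Irreducibility follows because Laurent polynomials form a domain. For normality let
  \<open>f / g\<close> be integral over \<open>k[V]\<close>:
  \<^item> Clearing denominators turns the integral relation into one over the polynomial ring
    \<open>k[x\<^sub>v | v \<in> Q\<^sub>0]\<close>, which is integrally closed (restrict to lines and use that \<open>k[s]\<close> is integrally
    closed over an algebraically closed field); hence \<open>f / g\<close> is a Laurent polynomial \<open>\<Lambda>\<close>
    on the orbit.
  \<^item> Restricting to one-parameter subgroups \<open>l \<mapsto> l\<^sup>u\<close> for weights \<open>u\<close> compatible with the
    arrows in the support of \<open>W\<close> shows that every exponent of \<open>\<Lambda>\<close> pairs nonnegatively with
    every such \<open>u\<close>.
  \<^item> A flow-decomposition argument (the incidence matrix of a quiver is totally unimodular)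
    shows that such exponents lie in the semigroup of arrow weights, so \<open>\<Lambda>\<close> comes from
    \<open>k[V]\<close>.
  The argument does not use the absence of oriented cycles; the theorem holds for every quiver.
\<close>

declare polyfun.intros [intro]

lemma polyfun_uminus [intro]: "f \<in> polyfun \<Longrightarrow> (\<lambda>x. - f x) \<in> polyfun"
  using polyfun.mult[OF polyfun.const[of "-1"], of f] by simp

lemma polyfun_diff [intro]: "f \<in> polyfun \<Longrightarrow> g \<in> polyfun \<Longrightarrow> (\<lambda>x. f x - g x) \<in> polyfun"
  using polyfun.add[of f "\<lambda>x. - g x"] polyfun_uminus[of g] by simp

lemma polyfun_sum [intro]:
  "(\<And>j. j \<in> A \<Longrightarrow> f j \<in> polyfun) \<Longrightarrow> (\<lambda>x. \<Sum>j\<in>A. f j x) \<in> polyfun"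
  by (induction A rule: infinite_finite_induct) auto

lemma polyfun_prod [intro]:
  "(\<And>j. j \<in> A \<Longrightarrow> f j \<in> polyfun) \<Longrightarrow> (\<lambda>x. \<Prod>j\<in>A. f j x) \<in> polyfun"
  by (induction A rule: infinite_finite_induct) auto

lemma polyfun_power [intro]: "f \<in> polyfun \<Longrightarrow> (\<lambda>x. f x ^ n) \<in> polyfun"
  using polyfun_prod[of "{..<n}" "\<lambda>_. f"] by simp

text \<open>The same closure properties, phrased in the function algebra; they are needed when
  polynomial functions occur as coefficients of univariate polynomials.\<close>

lemma polyfun_zero: "0 \<in> polyfun"
  using polyfun.const[of 0] by (simp add: zero_fun_def)

lemma polyfun_fun_add: "f \<in> polyfun \<Longrightarrow> g \<in> polyfun \<Longrightarrow> f + g \<in> polyfun"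
  using polyfun.add[of f g] by (simp add: plus_fun_def)

lemma polyfun_fun_mult: "f \<in> polyfun \<Longrightarrow> g \<in> polyfun \<Longrightarrow> f * g \<in> polyfun"
  using polyfun.mult[of f g] by (simp add: times_fun_def)

lemma polyfun_fun_sum: "(\<And>i. i \<in> A \<Longrightarrow> f i \<in> polyfun) \<Longrightarrow> sum f A \<in> polyfun"
  by (induction A rule: infinite_finite_induct) (auto intro: polyfun_zero polyfun_fun_add)

lemma fun_sum_apply: "(\<Sum>i\<in>A. f i) x = (\<Sum>i\<in>A. f i x)"
  by (induction A rule: infinite_finite_induct) auto

lemma fun_prod_apply: "(\<Prod>i\<in>A. f i) x = (\<Prod>i\<in>A. f i x)"
  by (induction A rule: infinite_finite_induct) auto

lemma fun_power_apply: "(f ^ n) x = (f x) ^ n"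
  by (induction n) auto

lemma polyfun_line:
  assumes "P \<in> polyfun"
  shows "\<exists>L. \<forall>s. P (\<lambda>i. p i + s * d i) = poly L s"
  using assms
proof induction
  case (const c) show ?case by (rule exI[of _ "[:c:]"]) simp
next
  case (coord i) show ?case by (rule exI[of _ "[:p i, d i:]"]) (simp add: algebra_simps)
next
  case (add f g)
  then obtain L1 L2 where "\<forall>s. f (\<lambda>i. p i + s * d i) = poly L1 s" "\<forall>s. g (\<lambda>i. p i + s * d i) = poly L2 s"
    by blast
  then show ?case by (intro exI[of _ "L1 + L2"]) simp
next
  case (mult f g)
  then obtain L1 L2 where "\<forall>s. f (\<lambda>i. p i + s * d i) = poly L1 s" "\<forall>s. g (\<lambda>i. p i + s * d i) = poly L2 s"
    by blast
  then show ?case by (intro exI[of _ "L1 * L2"]) simp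
qed

lemma poly_zero_on_infinite:
  fixes L :: "'k::idom poly"
  assumes "infinite A" "\<And>s. s \<in> A \<Longrightarrow> poly L s = 0"
  shows "L = 0"
proof (rule ccontr)
  assume "L \<noteq> 0"
  then have "finite {x. poly L x = 0}" by (rule poly_roots_finite)
  moreover have "A \<subseteq> {x. poly L x = 0}" using assms(2) by auto
  ultimately show False using assms(1) finite_subset by blast
qed

lemma polyfun_density:
  fixes P :: "('i::finite \<Rightarrow> 'k::field_char_0) \<Rightarrow> 'k"
  assumes "P \<in> polyfun" "\<And>x. (\<forall>i. x i \<noteq> 0) \<Longrightarrow> P x = 0"
  shows "P x = 0"
proof -
  obtain L where L: "\<forall>s. P (\<lambda>i. x i + s * 1) = poly L s"
    using polyfun_line[OF assms(1), of x "\<lambda>_. 1"] by blast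
  let ?B = "range (\<lambda>i. - x i)"
  have inf: "infinite (UNIV - ?B)"
    using infinite_UNIV_char_0 by (metis Diff_infinite_finite finite finite_imageI)
  have "L = 0"
  proof (rule poly_zero_on_infinite[OF inf])
    fix s assume "s \<in> UNIV - ?B"
    then have "\<forall>i. x i + s * 1 \<noteq> 0" by (auto simp: add_eq_0_iff)
    then show "poly L s = 0" using L assms(2) by metis
  qed
  then show ?thesis using L[rule_format, of 0] by simp
qed

lemma polyfun_domain:
  fixes P Q :: "('i \<Rightarrow> 'k::field_char_0) \<Rightarrow> 'k"
  assumes "P \<in> polyfun" "Q \<in> polyfun" "\<And>x. P x * Q x = 0"
  shows "(\<forall>x. P x = 0) \<or> (\<forall>x. Q x = 0)"
proof (rule ccontr)
  assume "\<not> ?thesis"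
  then obtain x0 x1 where x: "P x0 \<noteq> 0" "Q x1 \<noteq> 0" by auto
  obtain L1 where L1: "\<forall>s. P (\<lambda>i. x0 i + s * (x1 i - x0 i)) = poly L1 s"
    using polyfun_line[OF assms(1), of x0 "\<lambda>i. x1 i - x0 i"] by blast
  obtain L2 where L2: "\<forall>s. Q (\<lambda>i. x0 i + s * (x1 i - x0 i)) = poly L2 s"
    using polyfun_line[OF assms(2), of x0 "\<lambda>i. x1 i - x0 i"] by blast
  have "poly (L1 * L2) s = 0" for s using L1 L2 assms(3) by (metis poly_mult)
  then have "L1 * L2 = 0" using poly_all_0_iff_0 by blast
  moreover have "L1 \<noteq> 0" using L1[rule_format, of 0] x(1) by auto
  moreover have "L2 \<noteq> 0" using L2[rule_format, of 1] x(2) by auto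
  ultimately show False by simp
qed

definition monomial :: "('i::finite \<Rightarrow> nat) \<Rightarrow> ('i \<Rightarrow> 'k::comm_semiring_1) \<Rightarrow> 'k" where
  "monomial m x = (\<Prod>i\<in>UNIV. x i ^ m i)"

lemma monomial_add: "monomial (m + n) x = monomial m x * monomial n x"
  by (simp add: monomial_def power_add prod.distrib)

lemma monomial_polyfun [intro]: "(\<lambda>x::'i::finite \<Rightarrow> 'k::field. monomial m x) \<in> polyfun"
  unfolding monomial_def by (rule polyfun_prod, rule polyfun_power, rule polyfun.coord)

lemma monomial_split: "monomial m x = monomial (m(j := 0)) x * x j ^ m j"
proof -
  have "monomial m x = x j ^ m j * (\<Prod>i\<in>UNIV - {j}. x i ^ m i)"
    unfolding monomial_def by (rule prod.remove) auto
  moreover have "monomial (m(j := 0)) x = (\<Prod>i\<in>UNIV - {j}. x i ^ m i)"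
    unfolding monomial_def by (subst prod.remove[of UNIV j]) (auto intro!: prod.cong)
  ultimately show ?thesis by (simp add: mult.commute)
qed

lemma monomial_upd_indep: "monomial (m(j := 0)) (x(j := t)) = monomial (m(j := 0)) x"
  unfolding monomial_def by (rule prod.cong) auto

lemma regroup:
  fixes d :: "'j \<Rightarrow> 'k::comm_semiring_1"
  assumes "finite J"
  shows "\<exists>S c. finite S \<and> (\<forall>x. (\<Sum>j\<in>J. d j * monomial (mn j) x) = (\<Sum>m\<in>S. c m * monomial m x))"
proof (intro exI conjI allI)
  let ?c = "\<lambda>m. \<Sum>j\<in>{j\<in>J. mn j = m}. d j"
  fix x
  have "(\<Sum>j\<in>J. d j * monomial (mn j) x) = (\<Sum>m\<in>mn ` J. \<Sum>j\<in>{j\<in>J. mn j = m}. d j * monomial (mn j) x)"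
    by (rule sum.image_gen[OF assms])
  also have "\<dots> = (\<Sum>m\<in>mn ` J. ?c m * monomial m x)"
    by (intro sum.cong refl) (auto simp: sum_distrib_right)
  finally show "(\<Sum>j\<in>J. d j * monomial (mn j) x) = (\<Sum>m\<in>mn ` J. ?c m * monomial m x)" .
qed (use assms in simp)

lemma polyfun_rep:
  fixes P :: "('i::finite \<Rightarrow> 'k::field) \<Rightarrow> 'k"
  assumes "P \<in> polyfun"
  shows "\<exists>S c. finite S \<and> (\<forall>x. P x = (\<Sum>m\<in>S. c m * monomial m x))"
  using assms
proof induction
  case (const c) show ?case by (rule exI[of _ "{0}"], rule exI[of _ "\<lambda>_. c"]) (simp add: monomial_def)
next
  case (coord i)
  let ?m = "\<lambda>j. if j = i then 1 else 0::nat"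
  have "monomial ?m x = x i" for x :: "'i \<Rightarrow> 'k"
    unfolding monomial_def by (simp add: if_distrib prod.delta cong: if_cong)
  then show ?case by (intro exI[of _ "{?m}"] exI[of _ "\<lambda>_. 1"]) simp
next
  case (add f g)
  then obtain S1 c1 S2 c2 where h: "finite S1" "\<forall>x. f x = (\<Sum>m\<in>S1. c1 m * monomial m x)"
    "finite S2" "\<forall>x. g x = (\<Sum>m\<in>S2. c2 m * monomial m x)" by blast
  let ?J = "Inl ` S1 \<union> Inr ` S2"
  let ?d = "case_sum c1 c2" and ?mn = "case_sum id id"
  have "f x + g x = (\<Sum>j\<in>?J. ?d j * monomial (?mn j) x)" for x
    using h by (subst sum.union_disjoint) (auto simp: sum.reindex)
  moreover obtain S c where "finite S" "\<forall>x. (\<Sum>j\<in>?J. ?d j * monomial (?mn j) x) = (\<Sum>m\<in>S. c m * monomial m x)"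
    using regroup[of ?J ?d ?mn] h by auto
  ultimately show ?case by auto
next
  case (mult f g)
  then obtain S1 c1 S2 c2 where h: "finite S1" "\<forall>x. f x = (\<Sum>m\<in>S1. c1 m * monomial m x)"
    "finite S2" "\<forall>x. g x = (\<Sum>m\<in>S2. c2 m * monomial m x)" by blast
  let ?d = "\<lambda>(a, b). c1 a * c2 b" and ?mn = "\<lambda>(a, b). a + b"
  have "f x * g x = (\<Sum>j\<in>S1 \<times> S2. ?d j * monomial (?mn j) x)" for x
  proof -
    have "f x * g x = (\<Sum>a\<in>S1. \<Sum>b\<in>S2. (c1 a * monomial a x) * (c2 b * monomial b x))"
      using h by (simp add: sum_product)
    also have "\<dots> = (\<Sum>(a, b)\<in>S1 \<times> S2. (c1 a * monomial a x) * (c2 b * monomial b x))"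
      by (rule sum.cartesian_product)
    also have "\<dots> = (\<Sum>j\<in>S1 \<times> S2. ?d j * monomial (?mn j) x)"
      by (rule sum.cong) (auto simp: monomial_add mult_ac)
    finally show ?thesis .
  qed
  moreover obtain S c where "finite S" "\<forall>x. (\<Sum>j\<in>S1 \<times> S2. ?d j * monomial (?mn j) x) = (\<Sum>m\<in>S. c m * monomial m x)"
    using regroup[of "S1 \<times> S2" ?d ?mn] h by auto
  ultimately show ?case by auto
qed

lemma polyfun_rep_nonzero:
  fixes P :: "('i::finite \<Rightarrow> 'k::field) \<Rightarrow> 'k"
  assumes "P \<in> polyfun"
  shows "\<exists>S c. finite S \<and> (\<forall>m\<in>S. c m \<noteq> 0) \<and> (\<forall>x. P x = (\<Sum>m\<in>S. c m * monomial m x))"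
proof -
  obtain S c where S: "finite S" "\<forall>x. P x = (\<Sum>m\<in>S. c m * monomial m x)"
    using polyfun_rep[OF assms] by blast
  have "(\<Sum>m\<in>S. c m * monomial m x) = (\<Sum>m\<in>{m\<in>S. c m \<noteq> 0}. c m * monomial m x)" for x
    using S(1) by (intro sum.mono_neutral_right) auto
  then show ?thesis using S by (intro exI[of _ "{m\<in>S. c m \<noteq> 0}"] exI[of _ c]) auto
qed

lemma coeffs_vanish_on_punctured_line:
  fixes A :: "nat \<Rightarrow> 'k::field_char_0"
  assumes "finite E" "\<And>t. t \<noteq> 0 \<Longrightarrow> (\<Sum>e\<in>E. A e * t ^ e) = 0" "e \<in> E"
  shows "A e = 0"
proof -
  define L where "L = (\<Sum>e\<in>E. monom (A e) e)"
  have "L = 0"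
  proof (rule poly_zero_on_infinite[of "UNIV - {0}"])
    show "infinite (UNIV - {0::'k})" using infinite_UNIV_char_0 by simp
  qed (use assms(2) in \<open>auto simp: L_def poly_sum poly_monom\<close>)
  then have "coeff L e = 0" by simp
  then show ?thesis unfolding L_def coeff_sum coeff_monom using assms(1,3) by (simp add: sum.delta)
qed

lemma inj_on_erase_fiber:
  assumes "inj_on mn S"
  shows "inj_on (\<lambda>s. (mn s)(j := 0)) {s\<in>S. mn s j = e}"
proof (rule inj_onI)
  fix a b assume ab: "a \<in> {s\<in>S. mn s j = e}" "b \<in> {s\<in>S. mn s j = e}"
    and eq: "(mn a)(j := 0) = (mn b)(j := 0)"
  have "mn a i = mn b i" for i using ab fun_cong[OF eq, of i] by (cases "i = j") auto
  then show "a = b" using assms ab by (auto dest: inj_onD)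
qed

text \<open>The induction is
  on the set \<open>J\<close> of variables that occur; expanding in the powers of a new variable \<open>x j\<close>
  reduces to the univariate case.\<close>

lemma monomials_independent_aux:
  fixes c :: "'s \<Rightarrow> 'k::field_char_0" and mn :: "'s \<Rightarrow> 'i::finite \<Rightarrow> nat"
  assumes "finite J"
  shows "finite S \<Longrightarrow> inj_on mn S \<Longrightarrow> (\<forall>s\<in>S. \<forall>i. i \<notin> J \<longrightarrow> mn s i = 0) \<Longrightarrow>
    (\<forall>x. (\<forall>i. x i \<noteq> 0) \<longrightarrow> (\<Sum>s\<in>S. c s * monomial (mn s) x) = 0) \<Longrightarrow> \<forall>s\<in>S. c s = 0"
  using assms
proof (induction J arbitrary: S mn rule: finite_induct)
  case empty
  then have mn0: "mn s = 0" if "s \<in> S" for s using that by (auto simp: fun_eq_iff)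
  show ?case
  proof
    fix s assume s: "s \<in> S"
    then have "S = {s}" using empty(2) mn0 by (metis inj_onD singleton_iff subsetI subset_singletonD emptyE)
    then show "c s = 0" using empty(4) mn0[OF s] by (auto simp: monomial_def elim!: allE[of _ "\<lambda>_. 1"])
  qed
next
  case (insert j J)
  define A where "A e x = (\<Sum>s\<in>{s\<in>S. mn s j = e}. c s * monomial ((mn s)(j := 0)) x)" for e x
  have expand: "(\<Sum>s\<in>S. c s * monomial (mn s) x) = (\<Sum>e\<in>(\<lambda>s. mn s j) ` S. A e x * x j ^ e)" for x
  proof -
    have "(\<Sum>s\<in>S. c s * monomial (mn s) x) = (\<Sum>e\<in>(\<lambda>s. mn s j) ` S. \<Sum>s\<in>{s\<in>S. mn s j = e}. c s * monomial (mn s) x)"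
      by (rule sum.image_gen[OF insert(4)])
    also have "\<dots> = (\<Sum>e\<in>(\<lambda>s. mn s j) ` S. A e x * x j ^ e)"
      unfolding A_def sum_distrib_right
      by (intro sum.cong refl) (subst monomial_split[of _ _ j], simp add: mult.assoc)
    finally show ?thesis .
  qed
  have A_vanish: "A (mn s j) x = 0" if x: "\<forall>i. x i \<noteq> 0" and s: "s \<in> S" for s x
  proof (rule coeffs_vanish_on_punctured_line[where A = "\<lambda>e. A e x"])
    fix t :: 'k assume "t \<noteq> 0"
    then have "\<forall>i. (x(j := t)) i \<noteq> 0" using x by auto
    then show "(\<Sum>e\<in>(\<lambda>s. mn s j) ` S. A e x * t ^ e) = 0"
      using insert(7) expand[of "x(j := t)"] by (simp add: A_def monomial_upd_indep)
  qed (use insert(4) s in auto)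
  show ?case
  proof
    fix s assume s: "s \<in> S"
    have "\<forall>s'\<in>{s'\<in>S. mn s' j = mn s j}. c s' = 0"
    proof (rule insert.IH[OF _ inj_on_erase_fiber[OF insert(5)]])
      show "\<forall>x. (\<forall>i. x i \<noteq> 0) \<longrightarrow>
          (\<Sum>s'\<in>{s'\<in>S. mn s' j = mn s j}. c s' * monomial ((mn s')(j := 0)) x) = 0"
        using A_vanish[OF _ s] unfolding A_def by blast
    qed (use insert(4,6) in auto)
    then show "c s = 0" using s by blast
  qed
qed

lemma monomials_independent:
  fixes c :: "('i::finite \<Rightarrow> nat) \<Rightarrow> 'k::field_char_0"
  assumes "finite S" "\<And>x. (\<forall>i. x i \<noteq> 0) \<Longrightarrow> (\<Sum>m\<in>S. c m * monomial m x) = 0" "m \<in> S"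
  shows "c m = 0"
  using monomials_independent_aux[of UNIV S id c] assms by auto

subsection \<open>Homogenised integral relations\<close>

text \<open>For \<open>G \<noteq> 0\<close>, the quotient \<open>F / G\<close> is a root of the monic polynomial
  \<open>X\<^sup>n + \<Sum>\<^sub>j\<^sub><\<^sub>n C\<^sub>j X\<^sup>j\<close> iff \<open>monic_rel n C F G = 0\<close>; this is the form in which integrality
  appears in the definition of a normal variety.\<close>

definition monic_rel :: "nat \<Rightarrow> (nat \<Rightarrow> 'a::comm_semiring_1) \<Rightarrow> 'a \<Rightarrow> 'a \<Rightarrow> 'a" where
  "monic_rel n C F G = F ^ n + (\<Sum>j<n. C j * F ^ j * G ^ (n - j))"

lemma monic_rel_scale: "monic_rel n C (q * F) (q * G) = q ^ n * monic_rel n C F G"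
proof -
  have "C j * (q * F) ^ j * (q * G) ^ (n - j) = q ^ n * (C j * F ^ j * G ^ (n - j))" if "j < n" for j
  proof -
    have "C j * (q * F) ^ j * (q * G) ^ (n - j) = C j * F ^ j * G ^ (n - j) * (q ^ j * q ^ (n - j))"
      by (simp add: power_mult_distrib mult_ac)
    also have "q ^ j * q ^ (n - j) = q ^ n" using that by (simp add: power_add[symmetric])
    finally show ?thesis by (simp add: mult_ac)
  qed
  then show ?thesis
    unfolding monic_rel_def by (simp add: sum_distrib_left power_mult_distrib distrib_left)
qed

lemma monic_rel_coeff_scale:
  "monic_rel n (\<lambda>j. C j * q ^ (n - j)) F G = monic_rel n C F (q * G)"
  unfolding monic_rel_def by (simp add: power_mult_distrib mult_ac)

lemma monic_rel_cong: "(\<And>j. j < n \<Longrightarrow> C j = C' j) \<Longrightarrow> monic_rel n C F G = monic_rel n C' F G"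
  unfolding monic_rel_def by simp

lemma monic_rel_zero_denominator: "monic_rel n C F 0 = F ^ n"
  unfolding monic_rel_def by (simp add: zero_power)

lemma poly_monic_rel:
  "poly (monic_rel n C F G) s = monic_rel n (\<lambda>j. poly (C j) s) (poly F s) (poly G s)"
  unfolding monic_rel_def by (simp add: poly_sum)

lemma monic_rel_quotient:
  fixes F G X :: "'a::idom"
  assumes "monic_rel n C F G = 0" "F = X * G" "G \<noteq> 0"
  shows "monic_rel n C X 1 = 0"
  using assms monic_rel_scale[of n C G X 1] by (simp add: mult.commute)

lemma monic_rel_clear:
  fixes d :: "'a::comm_semiring_1"
  assumes "monic_rel n C F G = 0"
  shows "monic_rel n (\<lambda>j. C j * d * d ^ (n - j - 1)) (F * d * d) (G * d) = 0"
proof -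
  have "monic_rel n (\<lambda>j. C j * d * d ^ (n - j - 1)) (F * d * d) (G * d)
      = monic_rel n (\<lambda>j. C j * d ^ (n - j)) (F * d * d) (G * d)"
    by (intro monic_rel_cong) (simp add: power_Suc[symmetric] Suc_diff_Suc mult.assoc)
  also have "\<dots> = monic_rel n C (d * (d * F)) (d * (d * G))"
    by (simp add: monic_rel_coeff_scale mult_ac)
  also have "\<dots> = d ^ n * (d ^ n * monic_rel n C F G)" by (simp only: monic_rel_scale)
  finally show ?thesis using assms by simp
qed

lemma monic_rel_polyfun:
  assumes "F \<in> polyfun" "G \<in> polyfun" "\<forall>j<n. C j \<in> polyfun"
  shows "(\<lambda>x. monic_rel n (\<lambda>j. C j x) (F x) (G x)) \<in> polyfun"
  unfolding monic_rel_def
  by (rule polyfun.add, rule polyfun_power[OF assms(1)], rule polyfun_sum,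
      (rule polyfun.mult)+, use assms(3) in simp, rule polyfun_power[OF assms(1)],
      rule polyfun_power[OF assms(2)])

subsection \<open>The univariate polynomial ring is integrally closed\<close>

text \<open>Over an algebraically closed
  field: every root of \<open>G\<close> is a root of \<open>F\<close>, and the common linear factor can be cancelled.\<close>

lemma alg_closed_poly_integrally_closed:
  fixes F G :: "'k::field poly" and C :: "nat \<Rightarrow> 'k poly"
  assumes "alg_closed TYPE('k)"
  shows "G \<noteq> 0 \<Longrightarrow> monic_rel n C F G = 0 \<Longrightarrow> G dvd F"
proof (induction "degree G" arbitrary: F G rule: less_induct)
  case less
  show ?case
  proof (cases "degree G = 0")
    case True
    then show ?thesis using less.prems(1) by (metis is_unit_iff_degree unit_imp_dvd)
  next
    case False
    then obtain r where r: "poly G r = 0" using assms unfolding alg_closed_def by blast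
    have "poly (monic_rel n C F G) r = 0" using less.prems(2) by simp
    then have "poly F r ^ n = 0" by (simp only: poly_monic_rel r monic_rel_zero_denominator)
    then have "poly F r = 0" by simp
    define q where "q = [:-r, 1:]"
    obtain F1 where F1: "F = q * F1" using \<open>poly F r = 0\<close> unfolding q_def by (metis dvdE poly_eq_0_iff_dvd)
    obtain G1 where G1: "G = q * G1" using r unfolding q_def by (metis dvdE poly_eq_0_iff_dvd)
    have G1_nz: "G1 \<noteq> 0" using G1 less.prems(1) by auto
    have "degree G = degree G1 + 1"
      unfolding G1 using G1_nz by (subst degree_mult_eq) (auto simp: q_def)
    then have deg: "degree G1 < degree G" by simp
    have "q ^ n * monic_rel n C F1 G1 = 0"
      using less.prems(2) by (simp add: F1 G1 monic_rel_scale)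
    then have "monic_rel n C F1 G1 = 0" by (simp add: q_def)
    then have "G1 dvd F1" using less.hyps[OF deg G1_nz] by blast
    then show ?thesis using F1 G1 by simp
  qed
qed

text \<open>Univariate polynomials whose coefficients are polynomial functions on \<open>k\<^sup>I\<close>; they model
  the restriction of polynomial functions to the family of parallel lines \<open>s \<mapsto> p + s a\<close>.\<close>

definition polyfun_coeffs :: "(('i \<Rightarrow> 'k::field) \<Rightarrow> 'k) poly \<Rightarrow> bool" where
  "polyfun_coeffs L \<longleftrightarrow> (\<forall>n. coeff L n \<in> polyfun)"

lemma polyfun_coeffs_0: "polyfun_coeffs 0"
  unfolding polyfun_coeffs_def by (simp add: polyfun_zero)

lemma polyfun_coeffs_1: "polyfun_coeffs 1"
  unfolding polyfun_coeffs_def by (auto simp: coeff_1 one_fun_def polyfun_zero)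

lemma polyfun_coeffs_add: "polyfun_coeffs A \<Longrightarrow> polyfun_coeffs B \<Longrightarrow> polyfun_coeffs (A + B)"
  unfolding polyfun_coeffs_def by (simp add: polyfun_fun_add)

lemma polyfun_coeffs_diff: "polyfun_coeffs A \<Longrightarrow> polyfun_coeffs B \<Longrightarrow> polyfun_coeffs (A - B)"
  unfolding polyfun_coeffs_def by (simp add: fun_diff_def polyfun_diff)

lemma polyfun_coeffs_mult: "polyfun_coeffs A \<Longrightarrow> polyfun_coeffs B \<Longrightarrow> polyfun_coeffs (A * B)"
  unfolding polyfun_coeffs_def coeff_mult by (auto intro!: polyfun_fun_sum polyfun_fun_mult)

lemma polyfun_coeffs_smult: "a \<in> polyfun \<Longrightarrow> polyfun_coeffs A \<Longrightarrow> polyfun_coeffs (smult a A)"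
  unfolding polyfun_coeffs_def by (simp add: polyfun_fun_mult)

lemma polyfun_coeffs_monom: "a \<in> polyfun \<Longrightarrow> polyfun_coeffs (monom a k)"
  unfolding polyfun_coeffs_def by (simp add: coeff_monom polyfun_zero)

lemma polyfun_coeffs_pCons: "a \<in> polyfun \<Longrightarrow> polyfun_coeffs A \<Longrightarrow> polyfun_coeffs (pCons a A)"
  unfolding polyfun_coeffs_def by (simp add: coeff_pCons split: nat.splits)

lemma polyfun_coeffs_power: "polyfun_coeffs A \<Longrightarrow> polyfun_coeffs (A ^ n)"
  by (induction n) (auto intro: polyfun_coeffs_1 polyfun_coeffs_mult)

lemma polyfun_coeffs_prod:
  "(\<And>i. i \<in> I \<Longrightarrow> polyfun_coeffs (f i)) \<Longrightarrow> polyfun_coeffs (\<Prod>i\<in>I. f i)"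
  by (induction I rule: infinite_finite_induct) (auto intro: polyfun_coeffs_1 polyfun_coeffs_mult)

lemma polyfun_coeffs_sum:
  "(\<And>i. i \<in> I \<Longrightarrow> polyfun_coeffs (f i)) \<Longrightarrow> polyfun_coeffs (\<Sum>i\<in>I. f i)"
  by (induction I rule: infinite_finite_induct) (auto intro: polyfun_coeffs_0 polyfun_coeffs_add)

lemma polyfun_coeffs_division:
  fixes G :: "(('i \<Rightarrow> 'k::field) \<Rightarrow> 'k) poly"
  assumes "polyfun_coeffs G" "degree G = D" "coeff G D = (\<lambda>_. \<gamma>)" "\<gamma> \<noteq> 0"
  shows "polyfun_coeffs L \<Longrightarrow>
    \<exists>Q R. polyfun_coeffs Q \<and> polyfun_coeffs R \<and> L = Q * G + R \<and> (R = 0 \<or> degree R < D)"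
proof (induction "degree L" arbitrary: L rule: less_induct)
  case less
  show ?case
  proof (cases "degree L < D")
    case True
    then show ?thesis using less.prems by (intro exI[of _ 0] exI[of _ L]) (simp add: polyfun_coeffs_0)
  next
    case False
    define N where "N = degree L"
    define lc where "lc = coeff L N * (\<lambda>_. inverse \<gamma>)"
    define M where "M = monom lc (N - D) * G"
    have lc: "lc \<in> polyfun"
      using less.prems unfolding lc_def polyfun_coeffs_def by (intro polyfun_fun_mult) auto
    have "degree M \<le> N"
      unfolding M_def using degree_mult_le[of "monom lc (N - D)" G] degree_monom_le[of lc "N - D"]
        assms(2) False N_def by linarith
    moreover have "coeff M N = coeff L N"
      unfolding M_def coeff_monom_mult using False assms(3,4) N_def
      by (auto simp: lc_def times_fun_def)
    ultimately have "L - M = 0 \<or> degree (L - M) < N"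
      by (metis N_def degree_diff_le leading_coeff_0_iff linorder_not_le coeff_diff
          right_minus_eq nat_less_le)
    moreover have pc: "polyfun_coeffs (L - M)"
      unfolding M_def
      by (intro polyfun_coeffs_diff polyfun_coeffs_mult polyfun_coeffs_monom lc assms(1) less.prems)
    ultimately obtain Q R where QR: "polyfun_coeffs Q" "polyfun_coeffs R" "L - M = Q * G + R"
      "R = 0 \<or> degree R < D"
      using less.hyps[OF _ pc] polyfun_coeffs_0 N_def by (metis add_0 mult_zero_left)
    have "L = (Q + monom lc (N - D)) * G + R" using QR(3) unfolding M_def by (simp add: algebra_simps)
    then show ?thesis using QR polyfun_coeffs_add[OF QR(1) polyfun_coeffs_monom[OF lc]] by blast
  qed
qed

definition specialise :: "('i \<Rightarrow> 'k) \<Rightarrow> (('i \<Rightarrow> 'k::field) \<Rightarrow> 'k) poly \<Rightarrow> 'k poly" where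
  "specialise p L = map_poly (\<lambda>f. f p) L"

lemma coeff_specialise: "coeff (specialise p L) n = coeff L n p"
  unfolding specialise_def by (subst coeff_map_poly) auto

lemma degree_specialise: "degree (specialise p L) \<le> degree L"
  unfolding specialise_def by (rule map_poly_degree_leq)

lemma poly_specialise: "poly (specialise p L) s = poly L (\<lambda>_. s) p"
proof (induction L)
  case (pCons a L)
  have "specialise p (pCons a L) = pCons (a p) (specialise p L)"
    unfolding specialise_def by (subst map_poly_pCons) auto
  then show ?case using pCons by simp
qed (simp add: specialise_def)

lemma specialise_add: "specialise p (A + B) = specialise p A + specialise p B"
  by (rule poly_eqI) (simp add: coeff_specialise)

lemma specialise_mult:
  fixes A B :: "(('i \<Rightarrow> 'k::field_char_0) \<Rightarrow> 'k) poly"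
  shows "specialise p (A * B) = specialise p A * specialise p B"
  using poly_all_0_iff_0[of "specialise p (A * B) - specialise p A * specialise p B"]
  by (simp add: poly_specialise)

definition tdeg :: "('i::finite \<Rightarrow> nat) \<Rightarrow> nat" where
  "tdeg m = (\<Sum>i\<in>UNIV. m i)"

text \<open>\<open>line_monomial a m\<close> is the polynomial \<open>s \<mapsto> (p + s a)\<^sup>m\<close>, with coefficients
  depending on \<open>p\<close>; \<open>line_expansion a S c\<close> does the same for \<open>\<Sum>\<^sub>m\<^sub>\<in>\<^sub>S c\<^sub>m x\<^sup>m\<close>.\<close>

definition line_monomial :: "('i::finite \<Rightarrow> 'k::field) \<Rightarrow> ('i \<Rightarrow> nat) \<Rightarrow> (('i \<Rightarrow> 'k) \<Rightarrow> 'k) poly" where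
  "line_monomial a m = (\<Prod>i\<in>UNIV. [:\<lambda>p. p i, \<lambda>_. a i:] ^ m i)"

definition line_expansion ::
  "('i::finite \<Rightarrow> 'k::field) \<Rightarrow> ('i \<Rightarrow> nat) set \<Rightarrow> (('i \<Rightarrow> nat) \<Rightarrow> 'k) \<Rightarrow> (('i \<Rightarrow> 'k) \<Rightarrow> 'k) poly" where
  "line_expansion a S c = (\<Sum>m\<in>S. smult (\<lambda>_. c m) (line_monomial a m))"

lemma poly_line_expansion:
  "poly (line_expansion a S c) (\<lambda>_. s) p = (\<Sum>m\<in>S. c m * monomial m (\<lambda>i. p i + s * a i))"
  unfolding line_expansion_def line_monomial_def monomial_def
  by (simp add: poly_sum poly_prod fun_sum_apply fun_prod_apply fun_power_apply)

lemma polyfun_coeffs_line_expansion: "polyfun_coeffs (line_expansion a S c)"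
proof -
  have "polyfun_coeffs [:\<lambda>p. p i, \<lambda>_. a i:]" for i
    by (intro polyfun_coeffs_pCons polyfun_coeffs_0 polyfun.intros)
  then have "polyfun_coeffs (line_monomial a m)" for m
    unfolding line_monomial_def by (intro polyfun_coeffs_prod polyfun_coeffs_power)
  then show ?thesis
    unfolding line_expansion_def by (intro polyfun_coeffs_sum polyfun_coeffs_smult polyfun.intros)
qed

lemma coeff_mult_bound:
  fixes A B :: "'a::comm_semiring_0 poly"
  assumes "degree A \<le> m" "degree B \<le> n"
  shows "coeff (A * B) (m + n) = coeff A m * coeff B n"
proof (cases "degree A = m \<and> degree B = n")
  case True then show ?thesis using coeff_mult_degree_sum[of A B] by simp
next
  case False
  then have "degree A < m \<or> degree B < n" using assms by auto
  then have "coeff A m * coeff B n = 0" by (auto simp: coeff_eq_0)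
  moreover have "degree (A * B) < m + n"
    using degree_mult_le[of A B] \<open>degree A < m \<or> degree B < n\<close> assms by linarith
  ultimately show ?thesis by (simp add: coeff_eq_0)
qed

lemma coeff_prod_bound:
  fixes A :: "'j \<Rightarrow> 'a::comm_semiring_1 poly"
  assumes "finite I" "\<And>i. i \<in> I \<Longrightarrow> degree (A i) \<le> d i"
  shows "degree (\<Prod>i\<in>I. A i) \<le> (\<Sum>i\<in>I. d i) \<and>
    coeff (\<Prod>i\<in>I. A i) (\<Sum>i\<in>I. d i) = (\<Prod>i\<in>I. coeff (A i) (d i))"
  using assms
proof (induction I rule: finite_induct)
  case (insert j I)
  then have IH: "degree (\<Prod>i\<in>I. A i) \<le> (\<Sum>i\<in>I. d i)"
    "coeff (\<Prod>i\<in>I. A i) (\<Sum>i\<in>I. d i) = (\<Prod>i\<in>I. coeff (A i) (d i))" by auto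
  have dj: "degree (A j) \<le> d j" using insert by auto
  have "degree (A j * (\<Prod>i\<in>I. A i)) \<le> d j + (\<Sum>i\<in>I. d i)"
    using degree_mult_le[of "A j" "\<Prod>i\<in>I. A i"] IH dj by linarith
  then show ?case using insert IH coeff_mult_bound[OF dj IH(1)] by simp
qed simp

lemma line_monomial_bound:
  "degree (line_monomial a m) \<le> tdeg m \<and> coeff (line_monomial a m) (tdeg m) = (\<lambda>_. monomial m a)"
proof -
  have "degree ([:\<lambda>p. p i, \<lambda>_. a i:] ^ m i) \<le> m i \<and>
      coeff ([:\<lambda>p. p i, \<lambda>_. a i:] ^ m i) (m i) = (\<lambda>_. a i) ^ m i" for i
    using coeff_prod_bound[of "{..<m i}" "\<lambda>_. [:\<lambda>p. p i, \<lambda>_. a i:]" "\<lambda>_. 1"] by simp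
  then show ?thesis
    unfolding line_monomial_def tdeg_def
    using coeff_prod_bound[of UNIV "\<lambda>i. [:\<lambda>p. p i, \<lambda>_. a i:] ^ m i" m]
    by (auto simp: fun_eq_iff fun_prod_apply fun_power_apply monomial_def)
qed

lemma line_expansion_bound:
  assumes "finite S" "\<And>m. m \<in> S \<Longrightarrow> tdeg m \<le> D"
  shows "degree (line_expansion a S c) \<le> D \<and>
    coeff (line_expansion a S c) D = (\<lambda>_. \<Sum>m\<in>{m\<in>S. tdeg m = D}. c m * monomial m a)"
proof
  show "degree (line_expansion a S c) \<le> D"
    unfolding line_expansion_def
  proof (rule degree_sum_le[OF assms(1)])
    fix m assume "m \<in> S"
    then have "degree (line_monomial a m) \<le> D"
      using line_monomial_bound[of a m] assms(2)[of m] by linarith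
    then show "degree (smult (\<lambda>_. c m) (line_monomial a m)) \<le> D"
      using degree_smult_le order_trans by blast
  qed
  have "coeff (smult (\<lambda>_. c m) (line_monomial a m)) D
      = (\<lambda>_. if tdeg m = D then c m * monomial m a else 0)" if "m \<in> S" for m
  proof (cases "tdeg m = D")
    case False
    then have "coeff (line_monomial a m) D = 0"
      using line_monomial_bound[of a m] assms(2)[OF that] by (intro coeff_eq_0) simp
    then show ?thesis using False by (auto simp: zero_fun_def)
  qed (use line_monomial_bound[of a m] in \<open>auto simp: times_fun_def\<close>)
  then show "coeff (line_expansion a S c) D = (\<lambda>_. \<Sum>m\<in>{m\<in>S. tdeg m = D}. c m * monomial m a)"
    unfolding line_expansion_def coeff_sum
    by (simp add: fun_eq_iff fun_sum_apply sum.inter_filter[OF assms(1)])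
qed

text \<open>For a nonzero polynomial function \<open>G\<close> there is a direction \<open>a\<close> in which \<open>G\<close> has
  maximal degree with constant leading coefficient: take \<open>a\<close> with nonzero top-degree part.\<close>

lemma monic_line_family:
  fixes G :: "('i::finite \<Rightarrow> 'k::field_char_0) \<Rightarrow> 'k"
  assumes "G \<in> polyfun" "\<exists>x. G x \<noteq> 0"
  obtains L D \<gamma> a where "polyfun_coeffs L" "degree L = D" "coeff L D = (\<lambda>_. \<gamma>)" "\<gamma> \<noteq> 0"
    "\<forall>p s. poly L (\<lambda>_. s) p = G (\<lambda>i. p i + s * a i)"
proof -
  obtain S c where S: "finite S" "\<forall>m\<in>S. c m \<noteq> 0" "\<forall>x. G x = (\<Sum>m\<in>S. c m * monomial m x)"
    using polyfun_rep_nonzero[OF assms(1)] by blast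
  have "S \<noteq> {}" using assms(2) S(3) by auto
  define D where "D = Max (tdeg ` S)"
  define T where "T = {m\<in>S. tdeg m = D}"
  have D: "tdeg m \<le> D" if "m \<in> S" for m unfolding D_def using S(1) that by simp
  have "D \<in> tdeg ` S" unfolding D_def using S(1) \<open>S \<noteq> {}\<close> by simp
  then obtain m0 where "m0 \<in> T" unfolding T_def by auto
  obtain a where a_nz: "(\<Sum>m\<in>T. c m * monomial m a) \<noteq> 0"
    using monomials_independent[of T c m0] S(1,2) \<open>m0 \<in> T\<close> unfolding T_def by auto
  have bound: "degree (line_expansion a S c) \<le> D"
    "coeff (line_expansion a S c) D = (\<lambda>_. \<Sum>m\<in>T. c m * monomial m a)"
    using line_expansion_bound[OF S(1) D] unfolding T_def by auto
  then have "coeff (line_expansion a S c) D \<noteq> 0" using a_nz by (metis zero_fun_def)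
  then have deg: "degree (line_expansion a S c) = D" using bound(1) le_degree by (metis le_antisym)
  have "\<forall>p s. poly (line_expansion a S c) (\<lambda>_. s) p = G (\<lambda>i. p i + s * a i)"
    using S(3) by (simp add: poly_line_expansion)
  then show ?thesis by (rule that[OF polyfun_coeffs_line_expansion deg bound(2) a_nz])
qed

subsection \<open>The polynomial ring is integrally closed\<close>

text \<open>On each line \<open>s \<mapsto> p + s a\<close>, an integral relation for \<open>F / G\<close> restricts to one over
  \<open>k[s]\<close>, so the restriction of \<open>G\<close> divides that of \<open>F\<close>.\<close>

lemma integral_on_line_dvd:
  fixes F G :: "('i \<Rightarrow> 'k::field_char_0) \<Rightarrow> 'k" and C :: "nat \<Rightarrow> ('i \<Rightarrow> 'k) \<Rightarrow> 'k"
    and LF LG :: "(('i \<Rightarrow> 'k) \<Rightarrow> 'k) poly"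
  assumes ac: "alg_closed TYPE('k)" and C: "\<forall>j<n. C j \<in> polyfun"
    and rel: "\<And>x. monic_rel n (\<lambda>j. C j x) (F x) (G x) = 0"
    and LF: "\<forall>p s. poly LF (\<lambda>_. s) p = F (\<lambda>i. p i + s * a i)"
    and LG: "\<forall>p s. poly LG (\<lambda>_. s) p = G (\<lambda>i. p i + s * a i)"
    and nz: "specialise p LG \<noteq> 0"
  shows "specialise p LG dvd specialise p LF"
proof -
  have "\<forall>j\<in>{..<n}. \<exists>L. \<forall>s. C j (\<lambda>i. p i + s * a i) = poly L s"
    using C polyfun_line by blast
  then obtain CL where CL: "\<forall>j\<in>{..<n}. \<forall>s. C j (\<lambda>i. p i + s * a i) = poly (CL j) s"
    by (rule bchoice[THEN exE])
  have "poly (monic_rel n CL (specialise p LF) (specialise p LG)) s = 0" for s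
  proof -
    let ?x = "\<lambda>i. p i + s * a i"
    have "poly (monic_rel n CL (specialise p LF) (specialise p LG)) s
        = monic_rel n (\<lambda>j. poly (CL j) s) (F ?x) (G ?x)"
      by (simp add: poly_monic_rel poly_specialise LF LG)
    also have "\<dots> = monic_rel n (\<lambda>j. C j ?x) (F ?x) (G ?x)"
      using CL by (intro monic_rel_cong) simp
    finally show ?thesis using rel by simp
  qed
  then have "monic_rel n CL (specialise p LF) (specialise p LG) = 0"
    using poly_all_0_iff_0 by blast
  then show ?thesis by (rule alg_closed_poly_integrally_closed[OF ac nz])
qed

text \<open>Restrict to the lines
  \<open>s \<mapsto> p + s a\<close> in a direction \<open>a\<close> where \<open>G\<close> has constant leading coefficient and divide with
  remainder uniformly in \<open>p\<close>; on each line the remainder is divisible by the divisor, which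
  has larger degree, so it vanishes. The quotient at \<open>s = 0\<close> is the required function.\<close>

lemma polyfun_integrally_closed:
  fixes F G :: "('i::finite \<Rightarrow> 'k::field_char_0) \<Rightarrow> 'k" and C :: "nat \<Rightarrow> ('i \<Rightarrow> 'k) \<Rightarrow> 'k"
  assumes ac: "alg_closed TYPE('k)" and F: "F \<in> polyfun" and G: "G \<in> polyfun"
    and G_nz: "\<exists>x. G x \<noteq> 0" and C: "\<forall>j<n. C j \<in> polyfun"
    and rel: "\<And>x. monic_rel n (\<lambda>j. C j x) (F x) (G x) = 0"
  shows "\<exists>H\<in>polyfun. \<forall>x. F x = H x * G x"
proof -
  obtain LG D \<gamma> a where LG: "polyfun_coeffs LG" "degree LG = D" "coeff LG D = (\<lambda>_. \<gamma>)" "\<gamma> \<noteq> 0"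
    and poly_LG: "\<forall>p s. poly LG (\<lambda>_. s) p = G (\<lambda>i. p i + s * a i)"
    by (rule monic_line_family[OF G G_nz])
  obtain S c where "\<forall>x. F x = (\<Sum>m\<in>S. c m * monomial m x)"
    using polyfun_rep[OF F] by blast
  define LF where "LF = line_expansion a S c"
  have poly_LF: "\<forall>p s. poly LF (\<lambda>_. s) p = F (\<lambda>i. p i + s * a i)"
    unfolding LF_def using \<open>\<forall>x. F x = _\<close> by (simp add: poly_line_expansion)
  obtain Q R where QR: "polyfun_coeffs Q" "LF = Q * LG + R" "R = 0 \<or> degree R < D"
    using polyfun_coeffs_division[OF LG polyfun_coeffs_line_expansion] unfolding LF_def by blast
  have "F p = coeff Q 0 p * G p" for p
  proof -
    have spec_LG: "coeff (specialise p LG) D \<noteq> 0" using LG(3,4) by (simp add: coeff_specialise)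
    then have "specialise p LG \<noteq> 0" by auto
    then have "specialise p LG dvd specialise p R"
      using integral_on_line_dvd[OF ac C rel poly_LF poly_LG] QR(2)
      by (auto simp: specialise_add specialise_mult dvd_add_right_iff)
    moreover have "degree (specialise p R) < degree (specialise p LG)" if "specialise p R \<noteq> 0"
      using that QR(3) degree_specialise[of p R] le_degree[OF spec_LG] by (auto simp: specialise_def)
    ultimately have "specialise p R = 0" using dvd_imp_degree_le not_le by blast
    then have "poly (specialise p LF) 0 = poly (specialise p Q) 0 * poly (specialise p LG) 0"
      using QR(2) by (simp add: specialise_add specialise_mult)
    moreover have "poly (specialise p Q) 0 = coeff Q 0 p" by (simp add: poly_0_coeff_0 coeff_specialise)
    ultimately show ?thesis using poly_LF poly_LG by (simp add: poly_specialise)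
  qed
  moreover have "coeff Q 0 \<in> polyfun" using QR(1) unfolding polyfun_coeffs_def by simp
  ultimately show ?thesis by blast
qed

subsection \<open>Nonnegative integer combinations of arrow weights\<close>

definition arrow_weight :: "('a \<Rightarrow> 'v) \<Rightarrow> ('a \<Rightarrow> 'v) \<Rightarrow> 'a \<Rightarrow> 'v \<Rightarrow> int" where
  "arrow_weight h t a v = (if v = h a then 1 else 0) - (if v = t a then 1 else 0)"

lemma pairing_arrow_weight: "(\<Sum>v\<in>UNIV. u v * arrow_weight h t a (v::'v::finite)) = u (h a) - u (t a)"
proof -
  have "u v * arrow_weight h t a v = (if v = h a then u v else 0) - (if v = t a then u v else 0)" for v
    unfolding arrow_weight_def by auto
  then show ?thesis by (simp add: sum_subtractf sum.delta)
qed

definition arrow_comb :: "'a::finite set \<Rightarrow> ('a \<Rightarrow> 'v) \<Rightarrow> ('a \<Rightarrow> 'v) \<Rightarrow> ('v \<Rightarrow> int) \<Rightarrow> bool" where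
  "arrow_comb E h t m \<longleftrightarrow> (\<exists>N::'a \<Rightarrow> nat. (\<forall>a. a \<notin> E \<longrightarrow> N a = 0) \<and>
      (\<forall>v. m v = (\<Sum>a\<in>UNIV. int (N a) * arrow_weight h t a v)))"

definition succ_closed :: "'a set \<Rightarrow> ('a \<Rightarrow> 'v) \<Rightarrow> ('a \<Rightarrow> 'v) \<Rightarrow> 'v set \<Rightarrow> bool" where
  "succ_closed E h t U \<longleftrightarrow> (\<forall>a\<in>E. t a \<in> U \<longrightarrow> h a \<in> U)"

definition arrow_rel :: "'a set \<Rightarrow> ('a \<Rightarrow> 'v) \<Rightarrow> ('a \<Rightarrow> 'v) \<Rightarrow> ('v \<times> 'v) set" where
  "arrow_rel E h t = {(t a, h a) | a. a \<in> E}"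

definition unit_vec :: "'v \<Rightarrow> 'v \<Rightarrow> int" where
  "unit_vec z v = (if v = z then 1 else 0)"

lemma arrow_comb_zero: "arrow_comb E h t (\<lambda>_. 0)"
  unfolding arrow_comb_def by (rule exI[of _ "\<lambda>_. 0"]) simp

lemma arrow_comb_add:
  assumes "arrow_comb E h t m1" "arrow_comb E h t m2"
  shows "arrow_comb E h t (\<lambda>v. m1 v + m2 v)"
proof -
  obtain N1 N2 where N: "\<forall>a. a \<notin> E \<longrightarrow> N1 a = 0" "\<forall>v. m1 v = (\<Sum>a\<in>UNIV. int (N1 a) * arrow_weight h t a v)"
    "\<forall>a. a \<notin> E \<longrightarrow> N2 a = 0" "\<forall>v. m2 v = (\<Sum>a\<in>UNIV. int (N2 a) * arrow_weight h t a v)"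
    using assms unfolding arrow_comb_def by blast
  show ?thesis unfolding arrow_comb_def
    by (rule exI[of _ "\<lambda>a. N1 a + N2 a"]) (simp add: N algebra_simps sum.distrib)
qed

lemma arrow_comb_path:
  assumes "(x, y) \<in> (arrow_rel E h t)\<^sup>*"
  shows "arrow_comb E h t (\<lambda>v. unit_vec y v - unit_vec x v)"
  using assms
proof (induction rule: rtrancl_induct)
  case base then show ?case using arrow_comb_zero by simp
next
  case (step y z)
  then obtain a where a: "a \<in> E" "y = t a" "z = h a" unfolding arrow_rel_def by blast
  have "(\<Sum>b\<in>UNIV. int (if b = a then 1 else 0) * arrow_weight h t b v) = arrow_weight h t a v" for v
    by (simp add: if_distrib[of int] if_distrib[of "\<lambda>x. x * _"] cong: if_cong)
  then have "arrow_comb E h t (arrow_weight h t a)"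
    unfolding arrow_comb_def using a(1) by (intro exI[of _ "\<lambda>b. if b = a then 1 else 0"]) auto
  from arrow_comb_add[OF step.IH this] show ?case
    using a by (simp add: unit_vec_def arrow_weight_def)
qed

lemma succ_closed_reach:
  assumes "succ_closed E h t U" "x \<in> U" "(x, y) \<in> (arrow_rel E h t)\<^sup>*"
  shows "y \<in> U"
  using assms(3,2)
  by (induction rule: rtrancl_induct) (use assms(1) in \<open>auto simp: succ_closed_def arrow_rel_def\<close>)

definition tight :: "'a set \<Rightarrow> ('a \<Rightarrow> 'v) \<Rightarrow> ('a \<Rightarrow> 'v) \<Rightarrow> ('v \<Rightarrow> int) \<Rightarrow> 'v set \<Rightarrow> bool" where
  "tight E h t m U \<longleftrightarrow> succ_closed E h t U \<and> sum m U = 0"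

lemma tight_union:
  fixes m :: "'v::finite \<Rightarrow> int"
  assumes cl: "\<forall>U. succ_closed E h t U \<longrightarrow> sum m U \<ge> 0"
    and "tight E h t m A" "tight E h t m B"
  shows "tight E h t m (A \<union> B)"
proof -
  have "succ_closed E h t (A \<union> B)" "succ_closed E h t (A \<inter> B)"
    using assms(2,3) unfolding tight_def succ_closed_def by blast+
  then have "sum m (A \<union> B) \<ge> 0" "sum m (A \<inter> B) \<ge> 0" using cl by blast+
  moreover have "sum m (A \<union> B) + sum m (A \<inter> B) = sum m A + sum m B" by (rule sum.union_inter) auto
  ultimately show ?thesis
    using \<open>succ_closed E h t (A \<union> B)\<close> assms(2,3) unfolding tight_def by linarith
qed

lemma tight_cover:
  fixes m :: "'v::finite \<Rightarrow> int"
  assumes cl: "\<forall>U. succ_closed E h t U \<longrightarrow> sum m U \<ge> 0"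
  shows "finite P \<Longrightarrow> \<forall>p\<in>P. \<exists>U. tight E h t m U \<and> p \<in> U \<and> v \<notin> U \<Longrightarrow>
    \<exists>U. tight E h t m U \<and> P \<subseteq> U \<and> v \<notin> U"
proof (induction P rule: finite_induct)
  case empty
  have "tight E h t m {}" unfolding tight_def succ_closed_def by simp
  then show ?case by blast
next
  case (insert p P)
  obtain U1 where U1: "tight E h t m U1" "P \<subseteq> U1" "v \<notin> U1" using insert by auto
  obtain U2 where U2: "tight E h t m U2" "p \<in> U2" "v \<notin> U2" using insert.prems by auto
  have "tight E h t m (U1 \<union> U2)" using tight_union[OF cl U1(1) U2(1)] .
  then show ?case using U1 U2 by blast
qed

text \<open>Otherwise a tight set \<open>U\<close> contains all positive vertices
  reachable from \<open>v\<close> but not \<open>v\<close>, and the closed set \<open>U \<union> R\<close> (with \<open>R\<close> the vertices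
  reachable from \<open>v\<close>) would have negative sum.\<close>

lemma forcing_vertex:
  fixes m :: "'v::finite \<Rightarrow> int"
  assumes cl: "\<forall>U. succ_closed E h t U \<longrightarrow> sum m U \<ge> 0" and v: "m v < 0"
  shows "\<exists>u. (v, u) \<in> (arrow_rel E h t)\<^sup>* \<and> m u > 0 \<and> (\<forall>U. tight E h t m U \<longrightarrow> u \<in> U \<longrightarrow> v \<in> U)"
proof (rule ccontr)
  define R where "R = {y. (v, y) \<in> (arrow_rel E h t)\<^sup>*}"
  assume "\<not> ?thesis"
  then have "\<forall>p\<in>{u\<in>R. m u > 0}. \<exists>U. tight E h t m U \<and> p \<in> U \<and> v \<notin> U"
    unfolding R_def by blast
  then obtain U where U: "tight E h t m U" "{u\<in>R. m u > 0} \<subseteq> U" "v \<notin> U"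
    using tight_cover[OF cl, of "{u\<in>R. m u > 0}" v] by auto
  have "succ_closed E h t R"
    unfolding succ_closed_def
  proof (intro ballI impI)
    fix a assume "a \<in> E" "t a \<in> R"
    then have "(v, t a) \<in> (arrow_rel E h t)\<^sup>*" "(t a, h a) \<in> arrow_rel E h t"
      unfolding R_def arrow_rel_def by blast+
    then show "h a \<in> R" unfolding R_def by (simp add: rtrancl_into_rtrancl)
  qed
  then have "succ_closed E h t (U \<union> R)" using U(1) unfolding tight_def succ_closed_def by blast
  then have "0 \<le> sum m (U \<union> R)" using cl by blast
  also have "sum m (U \<union> R) = sum m U + m v + sum m (R - U - {v})"
  proof -
    have "sum m (U \<union> R) = sum m U + sum m (R - U)"
      by (subst Un_Diff_cancel[symmetric]) (rule sum.union_disjoint, auto)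
    moreover have "v \<in> R - U" using U(3) unfolding R_def by simp
    ultimately show ?thesis by (simp add: sum.remove)
  qed
  also have "sum m (R - U - {v}) \<le> 0" using U(2) by (intro sum_nonpos) (auto simp: not_less)
  finally show False using U(1) v unfolding tight_def by linarith
qed

lemma flow_step:
  fixes m :: "'v::finite \<Rightarrow> int"
  assumes cl: "\<forall>U. succ_closed E h t U \<longrightarrow> sum m U \<ge> 0"
    and path: "(v, u) \<in> (arrow_rel E h t)\<^sup>*"
    and forced: "\<forall>U. tight E h t m U \<longrightarrow> u \<in> U \<longrightarrow> v \<in> U"
  shows "\<forall>U. succ_closed E h t U \<longrightarrow> sum (\<lambda>x. m x - (unit_vec u x - unit_vec v x)) U \<ge> 0"
proof (intro allI impI)
  fix U assume U: "succ_closed E h t U"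
  have sU: "sum (\<lambda>x. m x - (unit_vec u x - unit_vec v x)) U
      = sum m U - ((if u \<in> U then 1 else 0) - (if v \<in> U then 1 else 0))"
    unfolding unit_vec_def by (simp add: sum_subtractf)
  have "sum m U \<ge> 0" using cl U by blast
  moreover have "u \<in> U" if "v \<in> U" using succ_closed_reach[OF U that path] .
  moreover have "sum m U \<ge> 1" if "u \<in> U" "v \<notin> U"
    using forced that U \<open>sum m U \<ge> 0\<close> unfolding tight_def by fastforce
  ultimately show "sum (\<lambda>x. m x - (unit_vec u x - unit_vec v x)) U \<ge> 0"
    unfolding sU by (cases "u \<in> U"; cases "v \<in> U") auto
qed

lemma flow_decomp:
  fixes h t :: "'a::finite \<Rightarrow> 'v::finite" and m :: "'v \<Rightarrow> int"
  shows "sum m UNIV = 0 \<Longrightarrow> \<forall>U. succ_closed E h t U \<longrightarrow> sum m U \<ge> 0 \<Longrightarrow> arrow_comb E h t m"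
proof (induction "\<Sum>v\<in>UNIV. nat \<bar>m v\<bar>" arbitrary: m rule: less_induct)
  case less
  note sum0 = less.prems(1) and cl = less.prems(2)
  show ?case
  proof (cases "\<exists>v. m v < 0")
    case False
    then have "m = (\<lambda>_. 0)" using sum_nonneg_eq_0_iff[of UNIV m] sum0 by (auto simp: not_less)
    then show ?thesis using arrow_comb_zero by simp
  next
    case True
    then obtain v where v: "m v < 0" by blast
    then obtain u where path: "(v, u) \<in> (arrow_rel E h t)\<^sup>*" and u: "m u > 0"
      and forced: "\<forall>U. tight E h t m U \<longrightarrow> u \<in> U \<longrightarrow> v \<in> U"
      using forcing_vertex[OF cl] by blast
    define m' where "m' x = m x - (unit_vec u x - unit_vec v x)" for x
    have "u \<noteq> v" using u v by auto
    have "sum m' UNIV = 0" unfolding m'_def using sum0 by (simp add: sum_subtractf unit_vec_def)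
    moreover have "\<forall>U. succ_closed E h t U \<longrightarrow> sum m' U \<ge> 0"
      unfolding m'_def by (rule flow_step[OF cl path forced])
    moreover have "(\<Sum>x\<in>UNIV. nat \<bar>m' x\<bar>) < (\<Sum>x\<in>UNIV. nat \<bar>m x\<bar>)"
    proof (rule sum_strict_mono_ex1)
      show "\<forall>x\<in>UNIV. nat \<bar>m' x\<bar> \<le> nat \<bar>m x\<bar>"
        using u v \<open>u \<noteq> v\<close> by (auto simp: m'_def unit_vec_def)
      show "\<exists>x\<in>UNIV. nat \<bar>m' x\<bar> < nat \<bar>m x\<bar>"
        using u \<open>u \<noteq> v\<close> by (intro bexI[of _ u]) (auto simp: m'_def unit_vec_def)
    qed simp
    ultimately have "arrow_comb E h t m'" using less.hyps by blast
    from arrow_comb_add[OF this arrow_comb_path[OF path]] show ?thesis unfolding m'_def by simp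
  qed
qed

subsection \<open>Characters of the torus\<close>

definition torus :: "('v \<Rightarrow> 'k::field) set" where
  "torus = {g. \<forall>v. g v \<noteq> 0}"

lemma torus_nz: "g \<in> torus \<Longrightarrow> g v \<noteq> 0"
  unfolding torus_def by simp

lemma torus_orbit_image: "torus_orbit h t W = (\<lambda>g. torus_act h t g W) ` torus"
  unfolding torus_orbit_def torus_def by blast

definition character :: "('v::finite \<Rightarrow> int) \<Rightarrow> ('v \<Rightarrow> 'k::field) \<Rightarrow> 'k" where
  "character m g = (\<Prod>v\<in>UNIV. g v powi m v)"

text \<open>The product of all coordinates; its powers are the denominators of characters.\<close>

definition coord_prod :: "('v::finite \<Rightarrow> 'k::field) \<Rightarrow> 'k" where
  "coord_prod g = (\<Prod>v\<in>UNIV. g v)"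

lemma character_zero [simp]: "character 0 g = 1"
  unfolding character_def by simp

lemma character_add: "g \<in> torus \<Longrightarrow> character (m1 + m2) g = character m1 g * character m2 g"
  unfolding character_def by (simp add: power_int_add prod.distrib torus_nz)

lemma character_sum:
  "g \<in> torus \<Longrightarrow> character (\<Sum>a\<in>A. f a) g = (\<Prod>a\<in>A. character (f a) g)"
  by (induction A rule: infinite_finite_induct) (auto simp: character_add)

lemma character_scale: "character (\<lambda>v. int k * m v) g = character m g ^ k"
  unfolding character_def
  by (simp add: power_int_mult mult.commute[of "int k"] prod_power_distrib)

lemma coord_prod_polyfun: "coord_prod \<in> polyfun"
  using polyfun_prod[of UNIV "\<lambda>v g. g v"] unfolding coord_prod_def by auto

lemma coord_prod_nz: "g \<in> torus \<Longrightarrow> coord_prod g \<noteq> 0"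
  unfolding coord_prod_def by (simp add: torus_nz)

lemma character_shift:
  assumes "g \<in> torus"
  shows "character (\<lambda>v. int (m v) - int E) g * coord_prod g ^ E = monomial m g"
proof -
  have "character (\<lambda>v. int (m v) - int E) g * coord_prod g ^ E
      = (\<Prod>v\<in>UNIV. g v powi (int (m v) - int E) * g v ^ E)"
    unfolding character_def coord_prod_def by (simp add: prod.distrib prod_power_distrib)
  also have "\<dots> = (\<Prod>v\<in>UNIV. g v ^ m v)"
    using torus_nz[OF assms]
    by (intro prod.cong refl) (metis diff_add_cancel power_int_add power_int_of_nat)
  finally show ?thesis unfolding monomial_def .
qed

definition dilate :: "('v \<Rightarrow> int) \<Rightarrow> 'k::field \<Rightarrow> ('v \<Rightarrow> 'k) \<Rightarrow> 'v \<Rightarrow> 'k" where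
  "dilate u l g = (\<lambda>v. l powi u v * g v)"

lemma dilate_torus: "l \<noteq> 0 \<Longrightarrow> g \<in> torus \<Longrightarrow> dilate u l g \<in> torus"
  unfolding dilate_def torus_def by (simp add: power_int_not_zero)

lemma dilate_one [simp]: "dilate u 1 g = g"
  unfolding dilate_def by simp

lemma character_dilate:
  assumes "(l::'k::field) \<noteq> 0"
  shows "character m (dilate u l g) = l powi (\<Sum>v\<in>UNIV. u v * m v) * character m g"
proof -
  have "character m (dilate u l g) = (\<Prod>v\<in>UNIV. l powi (u v * m v)) * character m g"
    unfolding character_def dilate_def
    by (simp add: power_int_mult_distrib power_int_mult prod.distrib)
  also have "(\<Prod>v\<in>A. l powi (u v * m v)) = l powi (\<Sum>v\<in>A. u v * m v)" for A
    using assms by (induction A rule: infinite_finite_induct) (auto simp: power_int_add)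
  finally show ?thesis .
qed

lemma torus_act_character:
  assumes "g \<in> torus"
  shows "torus_act h t g W a = W a * character (arrow_weight h t a) (g :: 'v::finite \<Rightarrow> 'k::field)"
proof -
  have "g v powi arrow_weight h t a v
      = (if v = h a then g v else 1) * (if v = t a then inverse (g v) else 1)" for v
    using torus_nz[OF assms, of v] unfolding arrow_weight_def by (auto simp: power_int_minus)
  then have "character (arrow_weight h t a) g = g (h a) * inverse (g (t a))"
    unfolding character_def by (simp add: prod.distrib prod.delta)
  then show ?thesis unfolding torus_act_def by (simp add: mult_ac)
qed

text \<open>The function \<open>\<phi>\<close> on the torus becomes a polynomial function after multiplication by
  \<open>coord_prod\<^sup>e\<close>, i.e. \<open>\<phi>\<close> is a Laurent polynomial with denominator \<open>coord_prod\<^sup>e\<close>.\<close>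

definition cleared_by :: "(('v::finite \<Rightarrow> 'k::field) \<Rightarrow> 'k) \<Rightarrow> nat \<Rightarrow> bool" where
  "cleared_by \<phi> e \<longleftrightarrow> (\<exists>P\<in>polyfun. \<forall>g\<in>torus. \<phi> g * coord_prod g ^ e = P g)"

lemma cleared_byI:
  "P \<in> polyfun \<Longrightarrow> (\<And>g. g \<in> torus \<Longrightarrow> \<phi> g * coord_prod g ^ e = P g) \<Longrightarrow> cleared_by \<phi> e"
  unfolding cleared_by_def by blast

lemma cleared_byE:
  assumes "cleared_by \<phi> e"
  obtains P where "P \<in> polyfun" "\<forall>g\<in>torus. \<phi> g * coord_prod g ^ e = P g"
  using assms that unfolding cleared_by_def by blast

lemma cleared_by_mono:
  assumes "cleared_by \<phi> e" "e \<le> e'"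
  shows "cleared_by \<phi> e'"
proof -
  obtain P where P: "P \<in> polyfun" "\<forall>g\<in>torus. \<phi> g * coord_prod g ^ e = P g"
    using assms(1) by (rule cleared_byE)
  have "\<phi> g * coord_prod g ^ e' = P g * coord_prod g ^ (e' - e)" if "g \<in> torus" for g
  proof -
    have "coord_prod g ^ e' = coord_prod g ^ e * coord_prod g ^ (e' - e)"
      using assms(2) by (metis le_add_diff_inverse power_add)
    then have "\<phi> g * coord_prod g ^ e' = (\<phi> g * coord_prod g ^ e) * coord_prod g ^ (e' - e)"
      by (simp only: mult.assoc)
    then show ?thesis using P(2) that by simp
  qed
  moreover have "(\<lambda>g. P g * coord_prod g ^ (e' - e)) \<in> polyfun"
    using polyfun.mult[OF P(1) polyfun_power[OF coord_prod_polyfun]] .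
  ultimately show ?thesis by (intro cleared_byI)
qed

lemma cleared_by_add:
  fixes \<phi>1 \<phi>2 :: "('v::finite \<Rightarrow> 'k::field) \<Rightarrow> 'k"
  assumes "cleared_by \<phi>1 e" "cleared_by \<phi>2 e"
  shows "cleared_by (\<lambda>g. \<phi>1 g + \<phi>2 g) e"
proof -
  obtain P1 where P1: "P1 \<in> polyfun" "\<forall>g\<in>torus. \<phi>1 g * coord_prod g ^ e = P1 g"
    using assms(1) by (rule cleared_byE)
  obtain P2 where P2: "P2 \<in> polyfun" "\<forall>g\<in>torus. \<phi>2 g * coord_prod g ^ e = P2 g"
    using assms(2) by (rule cleared_byE)
  show ?thesis
    by (rule cleared_byI[OF polyfun.add[OF P1(1) P2(1)]]) (simp add: P1(2) P2(2) distrib_right)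
qed

lemma cleared_by_mult:
  fixes \<phi>1 \<phi>2 :: "('v::finite \<Rightarrow> 'k::field) \<Rightarrow> 'k"
  assumes "cleared_by \<phi>1 e1" "cleared_by \<phi>2 e2"
  shows "cleared_by (\<lambda>g. \<phi>1 g * \<phi>2 g) (e1 + e2)"
proof -
  obtain P1 where P1: "P1 \<in> polyfun" "\<forall>g\<in>torus. \<phi>1 g * coord_prod g ^ e1 = P1 g"
    using assms(1) by (rule cleared_byE)
  obtain P2 where P2: "P2 \<in> polyfun" "\<forall>g\<in>torus. \<phi>2 g * coord_prod g ^ e2 = P2 g"
    using assms(2) by (rule cleared_byE)
  show ?thesis
  proof (rule cleared_byI[OF polyfun.mult[OF P1(1) P2(1)]])
    fix g :: "'v \<Rightarrow> 'k" assume "g \<in> torus"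
    have "(\<phi>1 g * \<phi>2 g) * coord_prod g ^ (e1 + e2)
        = (\<phi>1 g * coord_prod g ^ e1) * (\<phi>2 g * coord_prod g ^ e2)"
      by (simp add: power_add mult_ac)
    then show "\<phi>1 g * \<phi>2 g * coord_prod g ^ (e1 + e2) = P1 g * P2 g"
      using P1(2) P2(2) \<open>g \<in> torus\<close> by simp
  qed
qed

lemma coordinate_cleared:
  fixes h t :: "'a \<Rightarrow> 'v::finite" and W :: "'a \<Rightarrow> 'k::field"
  shows "cleared_by (\<lambda>g. torus_act h t g W a) 1"
proof (rule cleared_byI)
  show "(\<lambda>g. g (h a) * W a * (\<Prod>v\<in>UNIV - {t a}. g v)) \<in> polyfun"
    by (rule polyfun.mult, rule polyfun.mult, rule polyfun.coord, rule polyfun.const,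
        rule polyfun_prod, rule polyfun.coord)
  fix g :: "'v \<Rightarrow> 'k" assume g: "g \<in> torus"
  have "coord_prod g = g (t a) * (\<Prod>v\<in>UNIV - {t a}. g v)"
    unfolding coord_prod_def by (rule prod.remove) auto
  then have "inverse (g (t a)) * coord_prod g = (\<Prod>v\<in>UNIV - {t a}. g v)"
    using torus_nz[OF g] by (simp add: mult.assoc[symmetric])
  then show "torus_act h t g W a * coord_prod g ^ 1 = g (h a) * W a * (\<Prod>v\<in>UNIV - {t a}. g v)"
    unfolding torus_act_def by (simp add: mult.assoc)
qed

lemma pullback_cleared:
  fixes p :: "('a::finite \<Rightarrow> 'k::field) \<Rightarrow> 'k" and h t :: "'a \<Rightarrow> 'v::finite"
  assumes "p \<in> polyfun"
  shows "\<exists>e. cleared_by (\<lambda>g. p (torus_act h t g W)) e"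
  using assms
proof induction
  case (const c)
  have "cleared_by (\<lambda>g. c) 0" by (rule cleared_byI[of "\<lambda>_. c"]) auto
  then show ?case by blast
next
  case (coord a)
  show ?case by (rule exI, rule coordinate_cleared)
next
  case (add f1 f2)
  then obtain e1 e2 where "cleared_by (\<lambda>g. f1 (torus_act h t g W)) e1"
    "cleared_by (\<lambda>g. f2 (torus_act h t g W)) e2" by blast
  then have "cleared_by (\<lambda>g. f1 (torus_act h t g W) + f2 (torus_act h t g W)) (max e1 e2)"
    by (intro cleared_by_add) (auto intro: cleared_by_mono)
  then show ?case by blast
next
  case (mult f1 f2)
  then show ?case using cleared_by_mult by blast
qed

lemma pullback_cleared_common:
  fixes P :: "(('a::finite \<Rightarrow> 'k::field) \<Rightarrow> 'k) set" and h t :: "'a \<Rightarrow> 'v::finite"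
  assumes "finite P" "P \<subseteq> polyfun"
  shows "\<exists>E. \<forall>p\<in>P. cleared_by (\<lambda>g. p (torus_act h t g W)) E"
  using assms
proof (induction P rule: finite_induct)
  case (insert p P)
  then obtain E e where "\<forall>q\<in>P. cleared_by (\<lambda>g. q (torus_act h t g W)) E"
    "cleared_by (\<lambda>g. p (torus_act h t g W)) e"
    using pullback_cleared[of p h t W] by auto
  then have "\<forall>q\<in>insert p P. cleared_by (\<lambda>g. q (torus_act h t g W)) (max E e)"
    by (auto intro: cleared_by_mono)
  then show ?case by blast
qed simp

lemma orbit_in_closure:
  "g \<in> torus \<Longrightarrow> torus_act h t g W \<in> zariski_closure (torus_orbit h t W)"
  unfolding zariski_closure_def torus_orbit_image by blast

lemma vanish_on_closure:
  assumes "p \<in> polyfun" "\<And>g. g \<in> torus \<Longrightarrow> p (torus_act h t g W) = 0"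
    and "x \<in> zariski_closure (torus_orbit h t W)"
  shows "p x = 0"
  using assms unfolding zariski_closure_def torus_orbit_image by blast

lemma cleared_zero_vanish:
  fixes p :: "('a::finite \<Rightarrow> 'k::field) \<Rightarrow> 'k" and h t :: "'a \<Rightarrow> 'v::finite"
  assumes "p \<in> polyfun" "\<forall>g\<in>torus. p (torus_act h t g W) * coord_prod g ^ e = 0"
  shows "\<forall>x\<in>zariski_closure (torus_orbit h t W). p x = 0"
proof -
  have "p (torus_act h t g W) = 0" if "g \<in> torus" for g
    using assms(2)[rule_format, OF that] coord_prod_nz[OF that] by simp
  then show ?thesis using vanish_on_closure[OF assms(1)] by blast
qed

text \<open>The orbit closure is irreducible: its coordinate ring embeds into the Laurent polynomials
  on the torus, which have no zero divisors.\<close>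

lemma orbit_closure_irreducible:
  fixes h t :: "'a::finite \<Rightarrow> 'v::finite" and W :: "'a \<Rightarrow> 'k::field_char_0"
  shows "irreducible_variety (zariski_closure (torus_orbit h t W))"
  unfolding irreducible_variety_def
proof (intro conjI ballI impI)
  have "torus_act h t (\<lambda>_. 1) W = W" "(\<lambda>_. 1) \<in> torus" unfolding torus_act_def torus_def by simp_all
  then show "zariski_closure (torus_orbit h t W) \<noteq> {}"
    using orbit_in_closure[of "\<lambda>_::'v. 1::'k" h t W] by force
next
  fix p q :: "('a \<Rightarrow> 'k) \<Rightarrow> 'k" assume pq: "p \<in> polyfun" "q \<in> polyfun"
    and pq_zero: "\<forall>x\<in>zariski_closure (torus_orbit h t W). p x * q x = 0"
  obtain E where cl: "cleared_by (\<lambda>g. p (torus_act h t g W)) E" "cleared_by (\<lambda>g. q (torus_act h t g W)) E"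
    using pullback_cleared_common[of "{p, q}" h t W] pq by auto
  obtain P where P_poly: "P \<in> polyfun"
    and P: "\<forall>g\<in>torus. p (torus_act h t g W) * coord_prod g ^ E = P g"
    using cl(1) by (rule cleared_byE)
  obtain Q where Q_poly: "Q \<in> polyfun"
    and Q: "\<forall>g\<in>torus. q (torus_act h t g W) * coord_prod g ^ E = Q g"
    using cl(2) by (rule cleared_byE)
  note PQ = P_poly Q_poly
  have "P g * Q g = 0" for g
  proof (rule polyfun_density[of "\<lambda>g. P g * Q g"])
    fix g :: "'v \<Rightarrow> 'k" assume "\<forall>v. g v \<noteq> 0"
    then have g: "g \<in> torus" unfolding torus_def by simp
    have "p (torus_act h t g W) * q (torus_act h t g W) = 0"
      using pq_zero orbit_in_closure[OF g] by blast
    moreover have "P g * Q g = p (torus_act h t g W) * q (torus_act h t g W) * coord_prod g ^ (2 * E)"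
      using P[rule_format, OF g] Q[rule_format, OF g] by (simp add: mult_ac power2_eq_square power_mult)
    ultimately show "P g * Q g = 0" by simp
  qed (use PQ in blast)
  then have "(\<forall>g. P g = 0) \<or> (\<forall>g. Q g = 0)" using polyfun_domain[OF PQ] by blast
  then show "(\<forall>x\<in>zariski_closure (torus_orbit h t W). p x = 0) \<or>
      (\<forall>x\<in>zariski_closure (torus_orbit h t W). q x = 0)"
  proof (elim disjE)
    assume "\<forall>g. P g = 0"
    then show ?thesis using cleared_zero_vanish[OF pq(1), of h t W E] P by force
  next
    assume "\<forall>g. Q g = 0"
    then show ?thesis using cleared_zero_vanish[OF pq(2), of h t W E] Q by force
  qed
qed

subsection \<open>Restriction to one-parameter subgroups\<close>

text \<open>Then \<open>l \<mapsto> dilate u l g \<cdot> W\<close> extends to \<open>l = 0\<close>, so polynomial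
  functions restrict to polynomials in \<open>l\<close>.\<close>

definition compatible_weight :: "('a \<Rightarrow> 'k::field) \<Rightarrow> ('a \<Rightarrow> 'v) \<Rightarrow> ('a \<Rightarrow> 'v) \<Rightarrow> ('v \<Rightarrow> int) \<Rightarrow> bool" where
  "compatible_weight W h t u \<longleftrightarrow> (\<forall>a. W a \<noteq> 0 \<longrightarrow> u (t a) \<le> u (h a))"

lemma one_param_polynomial:
  fixes p :: "('a::finite \<Rightarrow> 'k::field) \<Rightarrow> 'k" and h t :: "'a \<Rightarrow> 'v::finite"
  assumes "p \<in> polyfun" "compatible_weight W h t u" "g \<in> torus"
  shows "\<exists>L. \<forall>l. l \<noteq> 0 \<longrightarrow> p (torus_act h t (dilate u l g) W) = poly L l"
  using assms(1)
proof induction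
  case (const c) show ?case by (rule exI[of _ "[:c:]"]) simp
next
  case (coord a)
  show ?case
  proof (cases "W a = 0")
    case True then show ?thesis by (intro exI[of _ 0]) (simp add: torus_act_def)
  next
    case False
    define n where "n = nat (u (h a) - u (t a))"
    have n: "int n = u (h a) - u (t a)"
      unfolding n_def using assms(2) False by (simp add: compatible_weight_def)
    have "torus_act h t (dilate u l g) W a = poly (monom (W a * character (arrow_weight h t a) g) n) l"
      if "l \<noteq> 0" for l
      using that n[symmetric]
      by (simp add: torus_act_character[OF dilate_torus[OF that assms(3)]] character_dilate
          pairing_arrow_weight poly_monom torus_act_character[OF assms(3)] mult_ac)
    then show ?thesis by auto
  qed
next
  case (add f1 f2)
  then obtain L1 L2 where "\<forall>l. l \<noteq> 0 \<longrightarrow> f1 (torus_act h t (dilate u l g) W) = poly L1 l"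
    "\<forall>l. l \<noteq> 0 \<longrightarrow> f2 (torus_act h t (dilate u l g) W) = poly L2 l" by blast
  then show ?case by (intro exI[of _ "L1 + L2"]) simp
next
  case (mult f1 f2)
  then obtain L1 L2 where "\<forall>l. l \<noteq> 0 \<longrightarrow> f1 (torus_act h t (dilate u l g) W) = poly L1 l"
    "\<forall>l. l \<noteq> 0 \<longrightarrow> f2 (torus_act h t (dilate u l g) W) = poly L2 l" by blast
  then show ?case by (intro exI[of _ "L1 * L2"]) simp
qed

lemma laurent_lowest_terms:
  fixes b :: "'s \<Rightarrow> 'k::field" and ex :: "'s \<Rightarrow> int"
  assumes "finite S" "\<forall>m\<in>S. \<sigma> \<le> ex m"
  shows "\<exists>K. (\<forall>l. l \<noteq> 0 \<longrightarrow> poly K l = l powi (- \<sigma>) * (\<Sum>m\<in>S. b m * l powi ex m)) \<and>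
    poly K 0 = (\<Sum>m\<in>{m\<in>S. ex m = \<sigma>}. b m)"
proof (intro exI conjI allI impI)
  define K where "K = (\<Sum>m\<in>S. monom (b m) (nat (ex m - \<sigma>)))"
  fix l :: 'k assume "l \<noteq> 0"
  have "l powi (- \<sigma>) * l powi ex m = l ^ nat (ex m - \<sigma>)" if "m \<in> S" for m
    using assms(2) that \<open>l \<noteq> 0\<close>
    by (simp add: power_int_add[symmetric] power_int_of_nat[symmetric] del: power_int_of_nat)
  then show "poly K l = l powi (- \<sigma>) * (\<Sum>m\<in>S. b m * l powi ex m)"
    unfolding K_def by (simp add: poly_sum poly_monom sum_distrib_left mult.left_commute)
next
  have "poly (\<Sum>m\<in>S. monom (b m) (nat (ex m - \<sigma>))) 0 = (\<Sum>m\<in>S. if ex m = \<sigma> then b m else 0)"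
    unfolding poly_0_coeff_0 coeff_sum coeff_monom
    using assms(2) by (intro sum.cong refl) (auto simp: eq_nat_nat_iff)
  then show "poly (\<Sum>m\<in>S. monom (b m) (nat (ex m - \<sigma>))) 0 = (\<Sum>m\<in>{m\<in>S. ex m = \<sigma>}. b m)"
    using assms(1) by (simp add: sum.inter_filter)
qed

lemma character_sum_one_param:
  fixes c :: "'s \<Rightarrow> 'k::field" and ex :: "'s \<Rightarrow> 'v::finite \<Rightarrow> int"
  assumes "finite S" "\<sigma> \<le> 0" "\<forall>m\<in>S. \<sigma> \<le> (\<Sum>v\<in>UNIV. u v * ex m v)"
  obtains K where
    "\<forall>l. l \<noteq> 0 \<longrightarrow> poly K l = l ^ nat (- \<sigma>) * (\<Sum>m\<in>S. c m * character (ex m) (dilate u l g))"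
    "poly K 0 = (\<Sum>m\<in>{m\<in>S. (\<Sum>v\<in>UNIV. u v * ex m v) = \<sigma>}. c m * character (ex m) g)"
proof -
  obtain K where K: "\<forall>l. l \<noteq> 0 \<longrightarrow> poly K l = l powi (- \<sigma>) *
      (\<Sum>m\<in>S. c m * character (ex m) g * l powi (\<Sum>v\<in>UNIV. u v * ex m v))"
    and K0: "poly K 0 = (\<Sum>m\<in>{m\<in>S. (\<Sum>v\<in>UNIV. u v * ex m v) = \<sigma>}. c m * character (ex m) g)"
    using laurent_lowest_terms[OF assms(1,3), of "\<lambda>m. c m * character (ex m) g"] by blast
  have "poly K l = l ^ nat (- \<sigma>) * (\<Sum>m\<in>S. c m * character (ex m) (dilate u l g))" if "l \<noteq> 0" for l
    using K that assms(2)
    by (simp add: character_dilate sum_distrib_left mult_ac power_int_of_nat[symmetric]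
        del: power_int_of_nat)
  then show thesis using that K0 by blast
qed

lemma integral_over_pole_vanishes:
  fixes K :: "'k::field poly"
  assumes "monic_rel n C K (monom 1 s) = 0" "s > 0"
  shows "poly K 0 = 0"
proof -
  have "poly (monic_rel n C K (monom 1 s)) 0 = poly K 0 ^ n"
    using assms(2) by (simp add: poly_monic_rel poly_monom zero_power monic_rel_zero_denominator)
  then show ?thesis using assms(1) by simp
qed

text \<open>Let \<open>\<Lambda> = \<Sum> c\<^sub>m \<chi>\<^sup>e\<^sup>x\<^sup>\<^sub>m\<close> be a Laurent polynomial on the torus with \<open>f = \<Lambda> \<cdot> gg\<close> on the orbit,
  where \<open>f / gg\<close> is integral over the coordinate ring. Restricting to the one-parameter subgroup
  of a compatible weight \<open>u\<close>, \<open>\<Lambda>\<close> becomes a Laurent polynomial in \<open>l\<close> which is integral over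
  \<open>k[l]\<close>; hence its terms of negative lowest order \<open>\<sigma>\<close> cancel.\<close>

lemma lowest_terms_vanish:
  fixes h t :: "'a::finite \<Rightarrow> 'v::finite" and W :: "'a \<Rightarrow> 'k::field_char_0"
    and f gg :: "('a \<Rightarrow> 'k) \<Rightarrow> 'k" and cc :: "nat \<Rightarrow> ('a \<Rightarrow> 'k) \<Rightarrow> 'k"
    and c :: "'s \<Rightarrow> 'k" and ex :: "'s \<Rightarrow> 'v \<Rightarrow> int"
  assumes gg: "gg \<in> polyfun" and cc: "\<forall>j<n. cc j \<in> polyfun"
    and rel: "\<forall>g\<in>torus. monic_rel n (\<lambda>j. cc j (torus_act h t g W)) (f (torus_act h t g W))
      (gg (torus_act h t g W)) = 0"
    and quot: "\<forall>g\<in>torus. f (torus_act h t g W)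
      = (\<Sum>m\<in>S. c m * character (ex m) g) * gg (torus_act h t g W)"
    and S: "finite S" and u: "compatible_weight W h t u"
    and \<sigma>: "\<sigma> < 0" "\<forall>m\<in>S. \<sigma> \<le> (\<Sum>v\<in>UNIV. u v * ex m v)"
    and g: "g \<in> torus" "gg (torus_act h t g W) \<noteq> 0"
  shows "(\<Sum>m\<in>{m\<in>S. (\<Sum>v\<in>UNIV. u v * ex m v) = \<sigma>}. c m * character (ex m) g) = 0"
proof -
  define X where "X l = (\<Sum>m\<in>S. c m * character (ex m) (dilate u l g))" for l
  define s where "s = nat (- \<sigma>)"
  have "\<sigma> \<le> 0" using \<sigma>(1) by simp
  then obtain K where KX: "\<forall>l. l \<noteq> 0 \<longrightarrow> poly K l = l ^ s * X l"
    and K0: "poly K 0 = (\<Sum>m\<in>{m\<in>S. (\<Sum>v\<in>UNIV. u v * ex m v) = \<sigma>}. c m * character (ex m) g)"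
    unfolding s_def X_def by (rule character_sum_one_param[OF S _ \<sigma>(2)])
  obtain GL where GL: "\<forall>l. l \<noteq> 0 \<longrightarrow> gg (torus_act h t (dilate u l g) W) = poly GL l"
    using one_param_polynomial[OF gg u g(1)] by blast
  have "\<forall>j\<in>{..<n}. \<exists>L. \<forall>l. l \<noteq> 0 \<longrightarrow> cc j (torus_act h t (dilate u l g) W) = poly L l"
    using one_param_polynomial[OF _ u g(1)] cc by blast
  then obtain CL where CL: "\<forall>j\<in>{..<n}. \<forall>l. l \<noteq> 0 \<longrightarrow> cc j (torus_act h t (dilate u l g) W) = poly (CL j) l"
    by (rule bchoice[THEN exE])
  have "GL \<noteq> 0" using GL g(2) by (metis dilate_one one_neq_zero poly_0)
  have "monic_rel n CL K (monom 1 s) = 0"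
  proof (rule poly_zero_on_infinite[of "UNIV - ({0} \<union> {l. poly GL l = 0})"])
    show "infinite (UNIV - ({0::'k} \<union> {l. poly GL l = 0}))"
      using poly_roots_finite[OF \<open>GL \<noteq> 0\<close>] infinite_UNIV_char_0 Diff_infinite_finite by blast
    fix l assume "l \<in> UNIV - ({0} \<union> {l. poly GL l = 0})"
    then have l: "l \<noteq> 0" "poly GL l \<noteq> 0" by auto
    let ?x = "torus_act h t (dilate u l g) W"
    have dil: "dilate u l g \<in> torus" using dilate_torus[OF l(1) g(1)] .
    have "monic_rel n (\<lambda>j. cc j ?x) (X l) 1 = 0"
      using monic_rel_quotient[OF rel[rule_format, OF dil]] quot[rule_format, OF dil] GL l
      unfolding X_def by simp
    have "poly (monic_rel n CL K (monom 1 s)) l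
        = monic_rel n (\<lambda>j. poly (CL j) l) (l ^ s * X l) (l ^ s * 1)"
      using KX l(1) by (simp add: poly_monic_rel poly_monom)
    also have "\<dots> = monic_rel n (\<lambda>j. cc j ?x) (l ^ s * X l) (l ^ s * 1)"
      using CL l(1) by (intro monic_rel_cong) simp
    also have "\<dots> = 0"
      using \<open>monic_rel n (\<lambda>j. cc j ?x) (X l) 1 = 0\<close> by (simp only: monic_rel_scale mult_zero_right)
    finally show "poly (monic_rel n CL K (monom 1 s)) l = 0" .
  qed
  moreover have "s > 0" using \<sigma>(1) unfolding s_def by simp
  ultimately show ?thesis using integral_over_pole_vanishes K0 by metis
qed

text \<open>Characters are linearly independent on every nonempty Zariski-open subset of the torus of the
  form \<open>{gg(g \<cdot> W) \<noteq> 0}\<close>: clear denominators and use that the polynomial ring is a domain.\<close>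

lemma characters_independent_on_open:
  fixes h t :: "'a::finite \<Rightarrow> 'v::finite" and W :: "'a \<Rightarrow> 'k::field_char_0"
    and gg :: "('a \<Rightarrow> 'k) \<Rightarrow> 'k" and c :: "('v \<Rightarrow> nat) \<Rightarrow> 'k"
  assumes gg: "gg \<in> polyfun" and S: "finite S" and gg_nz: "\<exists>g\<in>torus. gg (torus_act h t g W) \<noteq> 0"
    and vanish: "\<forall>g\<in>torus. gg (torus_act h t g W) \<noteq> 0 \<longrightarrow>
      (\<Sum>m\<in>S. c m * character (\<lambda>v. int (m v) - int E) g) = 0"
    and m: "m \<in> S"
  shows "c m = 0"
proof -
  define Z where "Z x = (\<Sum>m\<in>S. c m * monomial m x)" for x :: "'v \<Rightarrow> 'k"
  have Z_poly: "Z \<in> polyfun"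
    unfolding Z_def[abs_def] by (rule polyfun_sum, rule polyfun.mult, rule polyfun.const, rule monomial_polyfun)
  obtain e where "cleared_by (\<lambda>g. gg (torus_act h t g W)) e" using pullback_cleared[OF gg] by blast
  then obtain Gt where Gt_poly: "Gt \<in> polyfun"
    and Gt: "\<forall>g\<in>torus. gg (torus_act h t g W) * coord_prod g ^ e = Gt g"
    by (rule cleared_byE)
  have Z_char: "Z g = coord_prod g ^ E * (\<Sum>m\<in>S. c m * character (\<lambda>v. int (m v) - int E) g)"
    if "g \<in> torus" for g
    unfolding Z_def sum_distrib_left using character_shift[OF that] by (intro sum.cong) (auto simp: mult_ac)
  have "Z g * Gt g = 0" for g
  proof (rule polyfun_density[of "\<lambda>g. Z g * Gt g"])
    show "(\<lambda>g. Z g * Gt g) \<in> polyfun" using polyfun.mult[OF Z_poly Gt_poly] .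
    fix g :: "'v \<Rightarrow> 'k" assume "\<forall>v. g v \<noteq> 0"
    then have g: "g \<in> torus" unfolding torus_def by simp
    show "Z g * Gt g = 0"
      using Gt[rule_format, OF g] vanish[rule_format, OF g] Z_char[OF g] by (cases "gg (torus_act h t g W) = 0") auto
  qed
  moreover have "\<not> (\<forall>g. Gt g = 0)"
    using gg_nz Gt coord_prod_nz by fastforce
  ultimately have "\<forall>x. Z x = 0" using polyfun_domain[OF Z_poly Gt_poly] by blast
  then show ?thesis using monomials_independent[OF S _ m, of c] unfolding Z_def by blast
qed

lemma quotient_exponents_nonneg:
  fixes h t :: "'a::finite \<Rightarrow> 'v::finite" and W :: "'a \<Rightarrow> 'k::field_char_0"
    and f gg :: "('a \<Rightarrow> 'k) \<Rightarrow> 'k" and cc :: "nat \<Rightarrow> ('a \<Rightarrow> 'k) \<Rightarrow> 'k"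
    and c :: "('v \<Rightarrow> nat) \<Rightarrow> 'k"
  assumes gg: "gg \<in> polyfun" and cc: "\<forall>j<n. cc j \<in> polyfun"
    and rel: "\<forall>g\<in>torus. monic_rel n (\<lambda>j. cc j (torus_act h t g W)) (f (torus_act h t g W))
      (gg (torus_act h t g W)) = 0"
    and quot: "\<forall>g\<in>torus. f (torus_act h t g W)
      = (\<Sum>m\<in>S. c m * character (\<lambda>v. int (m v) - int E) g) * gg (torus_act h t g W)"
    and S: "finite S" and c_nz: "\<forall>m\<in>S. c m \<noteq> 0"
    and gg_nz: "\<exists>g\<in>torus. gg (torus_act h t g W) \<noteq> 0"
    and u: "compatible_weight W h t u" and m: "m \<in> S"
  shows "0 \<le> (\<Sum>v\<in>UNIV. u v * (int (m v) - int E))"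
proof (rule ccontr)
  define pr where "pr m = (\<Sum>v\<in>UNIV. u v * (int (m v) - int E))" for m :: "'v \<Rightarrow> nat"
  define \<sigma> where "\<sigma> = Min (pr ` S)"
  assume "\<not> ?thesis"
  then have "\<sigma> < 0" using m S unfolding \<sigma>_def pr_def by (meson Min_le finite_imageI imageI le_less_trans not_le)
  have \<sigma>_le: "\<forall>m\<in>S. \<sigma> \<le> pr m" unfolding \<sigma>_def using S by simp
  have "\<sigma> \<in> pr ` S" unfolding \<sigma>_def using S m by (intro Min_in) auto
  then obtain m0 where m0: "m0 \<in> S" "pr m0 = \<sigma>" by blast
  have "\<forall>g\<in>torus. gg (torus_act h t g W) \<noteq> 0 \<longrightarrow>
      (\<Sum>m\<in>{m\<in>S. pr m = \<sigma>}. c m * character (\<lambda>v. int (m v) - int E) g) = 0"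
    using lowest_terms_vanish[OF gg cc rel quot S u \<open>\<sigma> < 0\<close>] \<sigma>_le unfolding pr_def by blast
  then have "c m0 = 0"
    using characters_independent_on_open[OF gg _ gg_nz, of "{m\<in>S. pr m = \<sigma>}" c E m0] S m0 by simp
  then show False using c_nz m0 by blast
qed

subsection \<open>Exponents in the saturated cone lie in the semigroup\<close>

text \<open>An exponent pairing nonnegatively with every compatible weight is a nonnegative integer
  combination of weights of arrows in the support of \<open>W\<close>: test with \<open>u = \<plusminus>1\<close> and with the
  indicators of closed vertex sets, and apply the flow decomposition.\<close>

lemma compatible_nonneg_arrow_comb:
  fixes h t :: "'a::finite \<Rightarrow> 'v::finite" and W :: "'a \<Rightarrow> 'k::field" and mv :: "'v \<Rightarrow> int"
  assumes nonneg: "\<And>u. compatible_weight W h t u \<Longrightarrow> 0 \<le> (\<Sum>v\<in>UNIV. u v * mv v)"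
  shows "arrow_comb {a. W a \<noteq> 0} h t mv"
proof (rule flow_decomp)
  have "0 \<le> (\<Sum>v\<in>UNIV. 1 * mv v)" "0 \<le> (\<Sum>v\<in>UNIV. (- 1) * mv v)"
    using nonneg[of "\<lambda>_. 1"] nonneg[of "\<lambda>_. -1"] by (simp_all add: compatible_weight_def)
  then show "sum mv UNIV = 0" by (simp add: sum_negf)
  show "\<forall>U. succ_closed {a. W a \<noteq> 0} h t U \<longrightarrow> 0 \<le> sum mv U"
  proof (intro allI impI)
    fix U assume U: "succ_closed {a. W a \<noteq> 0} h t U"
    define u where "u v = (if v \<in> U then 1 else 0 :: int)" for v
    have "compatible_weight W h t u"
      using U unfolding compatible_weight_def succ_closed_def u_def by auto
    then have "0 \<le> (\<Sum>v\<in>UNIV. u v * mv v)" by (rule nonneg)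
    also have "(\<Sum>v\<in>UNIV. u v * mv v) = sum mv U"
      unfolding u_def by (simp add: if_distrib[of "\<lambda>x. x * _"] sum.If_cases)
    finally show "0 \<le> sum mv U" .
  qed
qed

text \<open>A character whose exponent lies in the semigroup of arrow weights of the support of \<open>W\<close>
  is the pullback of a polynomial function (a product of the rescaled coordinates
  \<open>x\<^sub>a / W\<^sub>a\<close>).\<close>

lemma arrow_comb_character:
  fixes h t :: "'a::finite \<Rightarrow> 'v::finite" and W :: "'a \<Rightarrow> 'k::field"
  assumes "arrow_comb {a. W a \<noteq> 0} h t mv"
  shows "\<exists>r\<in>polyfun. \<forall>g\<in>torus. r (torus_act h t g W) = character mv g"
proof -
  obtain N where N0: "\<forall>a. W a = 0 \<longrightarrow> N a = 0"
    and N: "\<forall>v. mv v = (\<Sum>a\<in>UNIV. int (N a) * arrow_weight h t a v)"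
    using assms unfolding arrow_comb_def by auto
  define r where "r x = (\<Prod>a\<in>UNIV. (x a * inverse (W a)) ^ N a)" for x :: "'a \<Rightarrow> 'k"
  have "r \<in> polyfun"
    unfolding r_def[abs_def]
    by (rule polyfun_prod, rule polyfun_power, rule polyfun.mult, rule polyfun.coord, rule polyfun.const)
  moreover have "r (torus_act h t g W) = character mv g" if g: "g \<in> torus" for g
  proof -
    have "mv = (\<Sum>a\<in>UNIV. (\<lambda>v. int (N a) * arrow_weight h t a v))"
      using N by (simp add: fun_eq_iff fun_sum_apply)
    then have "character mv g = (\<Prod>a\<in>UNIV. character (arrow_weight h t a) g ^ N a)"
      by (simp add: character_sum[OF g] character_scale)
    also have "\<dots> = r (torus_act h t g W)"
      unfolding r_def
    proof (intro prod.cong refl)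
      fix a
      show "character (arrow_weight h t a) g ^ N a = (torus_act h t g W a * inverse (W a)) ^ N a"
        using N0 by (cases "W a = 0") (simp_all add: torus_act_character[OF g] field_simps)
    qed
    finally show ?thesis by simp
  qed
  ultimately show ?thesis by blast
qed

subsection \<open>Integral quotients on the orbit are Laurent polynomials\<close>

text \<open>Clearing the denominators of the pullbacks of \<open>f\<close>, \<open>gg\<close> and the coefficients by a common
  power \<open>D\<^sup>E\<close> of \<open>D = coord_prod\<close> turns an integral relation on the orbit into one between
  polynomial functions on \<open>k\<^sup>V\<close> (valid everywhere, since the torus is dense).\<close>

lemma cleared_integral_relation:
  fixes h t :: "'a::finite \<Rightarrow> 'v::finite" and W :: "'a \<Rightarrow> 'k::field_char_0"
    and f gg :: "('a \<Rightarrow> 'k) \<Rightarrow> 'k" and cc :: "nat \<Rightarrow> ('a \<Rightarrow> 'k) \<Rightarrow> 'k"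
  assumes f: "f \<in> polyfun" and gg: "gg \<in> polyfun" and cc: "\<forall>j<n. cc j \<in> polyfun"
    and rel: "\<forall>g\<in>torus. monic_rel n (\<lambda>j. cc j (torus_act h t g W)) (f (torus_act h t g W))
      (gg (torus_act h t g W)) = 0"
  obtains E F G C where "F \<in> polyfun" "G \<in> polyfun" "\<forall>j<n. C j \<in> polyfun"
    "\<forall>x. monic_rel n (\<lambda>j. C j x) (F x) (G x) = 0"
    "\<forall>g\<in>torus. F g = f (torus_act h t g W) * coord_prod g ^ E * coord_prod g ^ E"
    "\<forall>g\<in>torus. G g = gg (torus_act h t g W) * coord_prod g ^ E"
proof -
  obtain E where E: "\<forall>p\<in>{f, gg} \<union> cc ` {..<n}. cleared_by (\<lambda>g. p (torus_act h t g W)) E"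
    using pullback_cleared_common[of "{f, gg} \<union> cc ` {..<n}" h t W] f gg cc by auto
  have "cleared_by (\<lambda>g. f (torus_act h t g W)) E" "cleared_by (\<lambda>g. gg (torus_act h t g W)) E"
    using E by simp_all
  obtain Ft where Ft: "Ft \<in> polyfun" "\<forall>g\<in>torus. f (torus_act h t g W) * coord_prod g ^ E = Ft g"
    using \<open>cleared_by (\<lambda>g. f (torus_act h t g W)) E\<close> by (rule cleared_byE)
  obtain G where G: "G \<in> polyfun" "\<forall>g\<in>torus. gg (torus_act h t g W) * coord_prod g ^ E = G g"
    using \<open>cleared_by (\<lambda>g. gg (torus_act h t g W)) E\<close> by (rule cleared_byE)
  have "\<forall>j\<in>{..<n}. \<exists>P. P \<in> polyfun \<and> (\<forall>g\<in>torus. cc j (torus_act h t g W) * coord_prod g ^ E = P g)"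
    using E unfolding cleared_by_def by blast
  then obtain Ct where Ct: "\<forall>j\<in>{..<n}. Ct j \<in> polyfun \<and>
      (\<forall>g\<in>torus. cc j (torus_act h t g W) * coord_prod g ^ E = Ct j g)"
    by (rule bchoice[THEN exE])
  define De where "De g = coord_prod g ^ E" for g :: "'v \<Rightarrow> 'k"
  have De_poly: "De \<in> polyfun"
    unfolding De_def[abs_def] by (rule polyfun_power[OF coord_prod_polyfun])
  define F where "F g = Ft g * De g" for g
  define C where "C j g = Ct j g * De g ^ (n - j - 1)" for j g
  have F_poly: "F \<in> polyfun" unfolding F_def[abs_def] by (rule polyfun.mult[OF Ft(1) De_poly])
  have C_poly: "\<forall>j<n. C j \<in> polyfun"
    unfolding C_def[abs_def] using Ct De_poly by (auto intro!: polyfun.mult polyfun_power)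
  have Fg: "\<forall>g\<in>torus. F g = f (torus_act h t g W) * De g * De g"
    using Ft(2) unfolding F_def De_def by simp
  have Gg: "\<forall>g\<in>torus. G g = gg (torus_act h t g W) * De g"
    using G(2) unfolding De_def by simp
  have "monic_rel n (\<lambda>j. C j g) (F g) (G g) = 0" for g
  proof (rule polyfun_density[of "\<lambda>g. monic_rel n (\<lambda>j. C j g) (F g) (G g)"])
    show "(\<lambda>g. monic_rel n (\<lambda>j. C j g) (F g) (G g)) \<in> polyfun"
      by (rule monic_rel_polyfun[OF F_poly G(1) C_poly])
    fix g :: "'v \<Rightarrow> 'k" assume "\<forall>v. g v \<noteq> 0"
    then have g: "g \<in> torus" unfolding torus_def by simp
    have "monic_rel n (\<lambda>j. C j g) (F g) (G g)
        = monic_rel n (\<lambda>j. cc j (torus_act h t g W) * De g * De g ^ (n - j - 1)) (F g) (G g)"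
    proof (rule monic_rel_cong)
      fix j assume "j < n"
      then have "Ct j g = cc j (torus_act h t g W) * De g" using Ct g unfolding De_def by simp
      then show "C j g = cc j (torus_act h t g W) * De g * De g ^ (n - j - 1)" unfolding C_def by simp
    qed
    also have "\<dots> = 0"
      unfolding Fg[rule_format, OF g] Gg[rule_format, OF g]
      by (rule monic_rel_clear[OF rel[rule_format, OF g]])
    finally show "monic_rel n (\<lambda>j. C j g) (F g) (G g) = 0" .
  qed
  then show thesis using that[OF F_poly G(1) C_poly] Fg Gg unfolding De_def by blast
qed

text \<open>If \<open>f / gg\<close> is integral over the coordinate ring of the orbit closure, then on the orbit
  \<open>f = \<Lambda> \<cdot> gg\<close> for a Laurent polynomial \<open>\<Lambda>\<close> in the torus coordinates: the cleared relation
  lives in the polynomial ring, which is integrally closed.\<close>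

lemma orbit_quotient_laurent:
  fixes h t :: "'a::finite \<Rightarrow> 'v::finite" and W :: "'a \<Rightarrow> 'k::field_char_0"
    and f gg :: "('a \<Rightarrow> 'k) \<Rightarrow> 'k" and cc :: "nat \<Rightarrow> ('a \<Rightarrow> 'k) \<Rightarrow> 'k"
  assumes ac: "alg_closed TYPE('k)" and f: "f \<in> polyfun" and gg: "gg \<in> polyfun"
    and cc: "\<forall>j<n. cc j \<in> polyfun" and gg_nz: "\<exists>g\<in>torus. gg (torus_act h t g W) \<noteq> 0"
    and rel: "\<forall>g\<in>torus. monic_rel n (\<lambda>j. cc j (torus_act h t g W)) (f (torus_act h t g W))
      (gg (torus_act h t g W)) = 0"
  shows "\<exists>E S c. finite S \<and> (\<forall>m\<in>S. c m \<noteq> 0) \<and> (\<forall>g\<in>torus. f (torus_act h t g W)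
      = (\<Sum>m\<in>S. c m * character (\<lambda>v. int (m v) - int E) g) * gg (torus_act h t g W))"
proof -
  obtain E F G C where F: "F \<in> polyfun" and G: "G \<in> polyfun" and C: "\<forall>j<n. C j \<in> polyfun"
    and relFG: "\<forall>x. monic_rel n (\<lambda>j. C j x) (F x) (G x) = 0"
    and Fg: "\<forall>g\<in>torus. F g = f (torus_act h t g W) * coord_prod g ^ E * coord_prod g ^ E"
    and Gg: "\<forall>g\<in>torus. G g = gg (torus_act h t g W) * coord_prod g ^ E"
    by (rule cleared_integral_relation[OF f gg cc rel])
  obtain g0 where "g0 \<in> torus" "gg (torus_act h t g0 W) \<noteq> 0" using gg_nz by blast
  then have "G g0 \<noteq> 0" using Gg coord_prod_nz[of g0] by simp
  then have "\<exists>x. G x \<noteq> 0" by blast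
  then obtain H where H: "H \<in> polyfun" "\<forall>x. F x = H x * G x"
    using polyfun_integrally_closed[OF ac F G _ C] relFG by blast
  obtain S c where S: "finite S" "\<forall>m\<in>S. c m \<noteq> 0" "\<forall>x. H x = (\<Sum>m\<in>S. c m * monomial m x)"
    using polyfun_rep_nonzero[OF H(1)] by blast
  have "f (torus_act h t g W) = (\<Sum>m\<in>S. c m * character (\<lambda>v. int (m v) - int E) g) * gg (torus_act h t g W)"
    if g: "g \<in> torus" for g
  proof -
    let ?\<Lambda> = "\<Sum>m\<in>S. c m * character (\<lambda>v. int (m v) - int E) g"
    have "H g = (\<Sum>m\<in>S. c m * monomial m g)" using S(3) by simp
    also have "\<dots> = coord_prod g ^ E * ?\<Lambda>"
      unfolding sum_distrib_left using character_shift[OF g] by (intro sum.cong) (auto simp: mult_ac)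
    finally have H_char: "H g = coord_prod g ^ E * ?\<Lambda>" .
    have "f (torus_act h t g W) * coord_prod g ^ E * coord_prod g ^ E = F g" using Fg g by simp
    also have "\<dots> = H g * G g" using H(2) by simp
    also have "\<dots> = (?\<Lambda> * gg (torus_act h t g W)) * coord_prod g ^ E * coord_prod g ^ E"
      using Gg g unfolding H_char by (simp add: mult_ac)
    finally show ?thesis using coord_prod_nz[OF g] by simp
  qed
  then show ?thesis using S(1,2) by blast
qed

lemma semigroup_laurent_pullback:
  fixes h t :: "'a::finite \<Rightarrow> 'v::finite" and W :: "'a \<Rightarrow> 'k::field"
    and c :: "'s \<Rightarrow> 'k" and ex :: "'s \<Rightarrow> 'v \<Rightarrow> int"
  assumes "\<forall>m\<in>S. arrow_comb {a. W a \<noteq> 0} h t (ex m)"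
  shows "\<exists>r\<in>polyfun. \<forall>g\<in>torus. r (torus_act h t g W) = (\<Sum>m\<in>S. c m * character (ex m) g)"
proof -
  have "\<forall>m\<in>S. \<exists>r. r \<in> polyfun \<and> (\<forall>g\<in>torus. r (torus_act h t g W) = character (ex m) g)"
  proof
    fix m assume "m \<in> S"
    then show "\<exists>r. r \<in> polyfun \<and> (\<forall>g\<in>torus. r (torus_act h t g W) = character (ex m) g)"
      using assms arrow_comb_character[of W h t "ex m"] by blast
  qed
  then obtain rm where rm: "\<forall>m\<in>S. rm m \<in> polyfun \<and>
      (\<forall>g\<in>torus. rm m (torus_act h t g W) = character (ex m) g)"
    by (rule bchoice[THEN exE])
  have "(\<lambda>x. \<Sum>m\<in>S. c m * rm m x) \<in> polyfun"
  proof (rule polyfun_sum, rule polyfun.mult, rule polyfun.const)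
    fix m assume "m \<in> S"
    then show "(\<lambda>x. rm m x) \<in> polyfun" using rm by simp
  qed
  moreover have "\<forall>g\<in>torus. (\<Sum>m\<in>S. c m * rm m (torus_act h t g W)) = (\<Sum>m\<in>S. c m * character (ex m) g)"
    using rm by simp
  ultimately show ?thesis by (intro bexI[of _ "\<lambda>x. \<Sum>m\<in>S. c m * rm m x"]) simp_all
qed

text \<open>The coordinate ring of the orbit closure is integrally closed: an integral quotient is a
  Laurent polynomial on the orbit whose exponents lie in the saturated cone, hence in the
  semigroup generated by the arrow weights, so it is the pullback of a polynomial function.\<close>

lemma orbit_closure_integrally_closed:
  fixes h t :: "'a::finite \<Rightarrow> 'v::finite" and W :: "'a \<Rightarrow> 'k::field_char_0"
    and f gg :: "('a \<Rightarrow> 'k) \<Rightarrow> 'k" and cc :: "nat \<Rightarrow> ('a \<Rightarrow> 'k) \<Rightarrow> 'k"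
  assumes ac: "alg_closed TYPE('k)" and f: "f \<in> polyfun" and gg: "gg \<in> polyfun"
    and cc: "\<forall>j<n. cc j \<in> polyfun"
    and gg_nz: "\<exists>x\<in>zariski_closure (torus_orbit h t W). gg x \<noteq> 0"
    and rel: "\<forall>x\<in>zariski_closure (torus_orbit h t W). monic_rel n (\<lambda>j. cc j x) (f x) (gg x) = 0"
  shows "\<exists>r\<in>polyfun. \<forall>x\<in>zariski_closure (torus_orbit h t W). f x = r x * gg x"
proof -
  have gg_nz': "\<exists>g\<in>torus. gg (torus_act h t g W) \<noteq> 0"
    using gg_nz vanish_on_closure[OF gg] by blast
  have rel': "\<forall>g\<in>torus. monic_rel n (\<lambda>j. cc j (torus_act h t g W)) (f (torus_act h t g W))
      (gg (torus_act h t g W)) = 0"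
    using rel orbit_in_closure by blast
  obtain E S c where S: "finite S" "\<forall>m\<in>S. c m \<noteq> 0"
    and quot: "\<forall>g\<in>torus. f (torus_act h t g W)
      = (\<Sum>m\<in>S. c m * character (\<lambda>v. int (m v) - int E) g) * gg (torus_act h t g W)"
    using orbit_quotient_laurent[OF ac f gg cc gg_nz' rel'] by blast
  have "\<forall>m\<in>S. arrow_comb {a. W a \<noteq> 0} h t (\<lambda>v. int (m v) - int E)"
  proof
    fix m assume "m \<in> S"
    show "arrow_comb {a. W a \<noteq> 0} h t (\<lambda>v. int (m v) - int E)"
      by (rule compatible_nonneg_arrow_comb)
        (rule quotient_exponents_nonneg[OF gg cc rel' quot S gg_nz' _ \<open>m \<in> S\<close>])
  qed
  then obtain r where r: "r \<in> polyfun"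
    "\<forall>g\<in>torus. r (torus_act h t g W) = (\<Sum>m\<in>S. c m * character (\<lambda>v. int (m v) - int E) g)"
    using semigroup_laurent_pullback[of S W h t "\<lambda>m v. int (m v) - int E" c] by blast
  have "f x - r x * gg x = 0" if "x \<in> zariski_closure (torus_orbit h t W)" for x
  proof (rule vanish_on_closure[OF _ _ that])
    show "(\<lambda>x. f x - r x * gg x) \<in> polyfun" by (rule polyfun_diff[OF f polyfun.mult[OF r(1) gg]])
  qed (use quot r(2) in simp)
  then show ?thesis using r(1) by auto
qed

theorem mainTheorem15:
  fixes h t :: "'a::finite \<Rightarrow> 'v::finite"
    and W :: "'a \<Rightarrow> 'k::field_char_0"
  assumes "alg_closed TYPE('k)"
    and "\<not> has_oriented_cycle h t"
  shows "normal_variety (zariski_closure (torus_orbit h t W))"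
  unfolding normal_variety_def
proof (intro conjI orbit_closure_irreducible ballI impI allI)
  fix f g :: "('a \<Rightarrow> 'k) \<Rightarrow> 'k" and n :: nat and c :: "nat \<Rightarrow> ('a \<Rightarrow> 'k) \<Rightarrow> 'k"
  assume "f \<in> polyfun" "g \<in> polyfun" "\<exists>x\<in>zariski_closure (torus_orbit h t W). g x \<noteq> 0"
    "0 < n" "\<forall>j<n. c j \<in> polyfun"
    "\<forall>x\<in>zariski_closure (torus_orbit h t W). f x ^ n + (\<Sum>j<n. c j x * f x ^ j * g x ^ (n - j)) = 0"
  then show "\<exists>r\<in>polyfun. \<forall>x\<in>zariski_closure (torus_orbit h t W). f x = r x * g x"
    using orbit_closure_integrally_closed[OF assms(1)] by (simp add: monic_rel_def)
qed

end
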